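(* Let $R$ be a left coherent ring and let $M$ be a finitely presented left $R$-module with finite quasi-projective dimension. If $\mathrm{Ext}^n_R(M,M\oplus R)=0$ for all $n\geqslant 1$, then $M$ is projective.
   Context: A ring is left coherent if every finitely generated left ideal is finitely presented; then the category $R\text{-mod}$ of finitely presented left $R$-modules is abelian with enough projectives. Complexes are indexed homologically ($d_i:X_i\to X_{i-1}$); $\sup X_\bullet=\sup\{i:X_i\neq0\}$, $\inf X_\bullet=\inf\{i:X_i\ne0\}$, $\mathrm{hsup}\,X_\bullet=\sup\{i:H_i(X_\bullet)\neq0\}$. For an abelian category $\mathcal{A}$ with enough projectives, a quasi-projective resolution of $M\in\mathcal{A}$ is a complex $P_\bullet$ with $\inf P_\bullet>-\infty$, all terms projective, such that for every $j\geqslant \inf P_\bullet$ there is $n_j\geqslant0$ with $H_j(P_\bullet)\cong M^{n_j}$, not all $n_j$ zero; it is finite if $\sup P_\bullet<\infty$. For $M\neq0$, $\mathrm{qpd}_{\mathcal{A}}M=\inf\{\sup P_\bullet-\mathrm{hsup}\,P_\bullet\}$ over finite quasi-projective resolutions ($\infty$ if none), and $\mathrm{qpd}\,0=0$. Here the quasi-projective dimension of $M$ is taken in the abelian category of finitely presented left $R$-modules. *)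

theory Defs
  imports "HOL-Algebra.Module"
begin

text \<open>HOL-Algebra's locale module requires a commutative ring; for left modules
over an arbitrary ring we reuse its axioms (which do not involve commutativity).\<close>

definition left_module :: "'r ring \<Rightarrow> ('r, 'm) module \<Rightarrow> bool" where
  "left_module R M \<longleftrightarrow> ring R \<and> abelian_group M \<and> module_axioms R M"

definition lin_map :: "'r ring \<Rightarrow> ('r, 'm) module \<Rightarrow> ('r, 'n) module \<Rightarrow> ('m \<Rightarrow> 'n) \<Rightarrow> bool" where
  "lin_map R M N f \<longleftrightarrow> f \<in> carrier M \<rightarrow> carrier N
     \<and> (\<forall>x\<in>carrier M. \<forall>y\<in>carrier M. f (x \<oplus>\<^bsub>M\<^esub> y) = f x \<oplus>\<^bsub>N\<^esub> f y)
     \<and> (\<forall>r\<in>carrier R. \<forall>x\<in>carrier M. f (r \<odot>\<^bsub>M\<^esub> x) = r \<odot>\<^bsub>N\<^esub> f x)"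

definition mod_iso :: "'r ring \<Rightarrow> ('r, 'm) module \<Rightarrow> ('r, 'n) module \<Rightarrow> bool" where
  "mod_iso R M N \<longleftrightarrow> (\<exists>f. lin_map R M N f \<and> bij_betw f (carrier M) (carrier N))"

definition is_zero_mod :: "('r, 'm) module \<Rightarrow> bool" where
  "is_zero_mod M \<longleftrightarrow> carrier M = {\<zero>\<^bsub>M\<^esub>}"

definition submod :: "('r, 'm) module \<Rightarrow> 'm set \<Rightarrow> ('r, 'm) module" where
  "submod M S = M\<lparr>carrier := S\<rparr>"

definition span :: "'r ring \<Rightarrow> ('r, 'm) module \<Rightarrow> 'm set \<Rightarrow> 'm set" where
  "span R M S = {finsum M (\<lambda>x. c x \<odot>\<^bsub>M\<^esub> x) S | c. c \<in> S \<rightarrow> carrier R}"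

definition fin_gen :: "'r ring \<Rightarrow> ('r, 'm) module \<Rightarrow> bool" where
  "fin_gen R M \<longleftrightarrow> (\<exists>S. finite S \<and> S \<subseteq> carrier M \<and> span R M S = carrier M)"

definition ring_mod :: "'r ring \<Rightarrow> ('r, 'r) module" where
  "ring_mod R = \<lparr>carrier = carrier R, monoid.mult = monoid.mult R, one = \<one>\<^bsub>R\<^esub>,
     zero = \<zero>\<^bsub>R\<^esub>, add = add R, smult = monoid.mult R\<rparr>"

definition pow_mod :: "('r, 'm) module \<Rightarrow> nat \<Rightarrow> ('r, nat \<Rightarrow> 'm) module" where
  "pow_mod M n = \<lparr>carrier = {f. (\<forall>i<n. f i \<in> carrier M) \<and> (\<forall>i\<ge>n. f i = \<zero>\<^bsub>M\<^esub>)},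
     monoid.mult = undefined, one = undefined,
     zero = (\<lambda>i. \<zero>\<^bsub>M\<^esub>), add = (\<lambda>f g i. f i \<oplus>\<^bsub>M\<^esub> g i),
     smult = (\<lambda>r f i. r \<odot>\<^bsub>M\<^esub> f i)\<rparr>"

definition free_mod :: "'r ring \<Rightarrow> nat \<Rightarrow> ('r, nat \<Rightarrow> 'r) module" where
  "free_mod R n = pow_mod (ring_mod R) n"

definition dsum :: "('r, 'm) module \<Rightarrow> ('r, 'n) module \<Rightarrow> ('r, 'm \<times> 'n) module" where
  "dsum M N = \<lparr>carrier = carrier M \<times> carrier N,
     monoid.mult = undefined, one = undefined,
     zero = (\<zero>\<^bsub>M\<^esub>, \<zero>\<^bsub>N\<^esub>),
     add = (\<lambda>p q. (fst p \<oplus>\<^bsub>M\<^esub> fst q, snd p \<oplus>\<^bsub>N\<^esub> snd q)),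
     smult = (\<lambda>r p. (r \<odot>\<^bsub>M\<^esub> fst p, r \<odot>\<^bsub>N\<^esub> snd p))\<rparr>"

definition fin_pres :: "'r ring \<Rightarrow> ('r, 'm) module \<Rightarrow> bool" where
  "fin_pres R M \<longleftrightarrow> left_module R M \<and>
     (\<exists>n \<pi>. lin_map R (free_mod R n) M \<pi> \<and> \<pi> ` carrier (free_mod R n) = carrier M
        \<and> fin_gen R (submod (free_mod R n) {x \<in> carrier (free_mod R n). \<pi> x = \<zero>\<^bsub>M\<^esub>}))"

definition left_coherent :: "'r ring \<Rightarrow> bool" where
  "left_coherent R \<longleftrightarrow> ring R \<and>
     (\<forall>S. finite S \<and> S \<subseteq> carrier R \<longrightarrow>
        fin_pres R (submod (ring_mod R) (span R (ring_mod R) S)))"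

text \<open>Projective objects of R-mod: finitely presented modules that are direct summands
  of a finitely generated free module R^n.\<close>
definition projective :: "'r ring \<Rightarrow> ('r, 'm) module \<Rightarrow> bool" where
  "projective R P \<longleftrightarrow> fin_pres R P \<and>
     (\<exists>n s p. lin_map R P (free_mod R n) s \<and> lin_map R (free_mod R n) P p
        \<and> (\<forall>x\<in>carrier P. p (s x) = x))"

definition is_complex :: "'r ring \<Rightarrow> (int \<Rightarrow> ('r, 'b) module) \<Rightarrow> (int \<Rightarrow> 'b \<Rightarrow> 'b) \<Rightarrow> bool" where
  "is_complex R X d \<longleftrightarrow>
     (\<forall>i. left_module R (X i) \<and> lin_map R (X i) (X (i - 1)) (d i)) \<and>
     (\<forall>i. \<forall>x\<in>carrier (X i). d (i - 1) (d i x) = \<zero>\<^bsub>X (i - 2)\<^esub>)"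

definition cycles :: "(int \<Rightarrow> ('r, 'b) module) \<Rightarrow> (int \<Rightarrow> 'b \<Rightarrow> 'b) \<Rightarrow> int \<Rightarrow> 'b set" where
  "cycles X d j = {x \<in> carrier (X j). d j x = \<zero>\<^bsub>X (j - 1)\<^esub>}"

definition boundaries :: "(int \<Rightarrow> ('r, 'b) module) \<Rightarrow> (int \<Rightarrow> 'b \<Rightarrow> 'b) \<Rightarrow> int \<Rightarrow> 'b set" where
  "boundaries X d j = d (j + 1) ` carrier (X (j + 1))"

definition homology :: "(int \<Rightarrow> ('r, 'b) module) \<Rightarrow> (int \<Rightarrow> 'b \<Rightarrow> 'b) \<Rightarrow> int \<Rightarrow> ('r, 'b set) module" where
  "homology X d j =
    (let B = boundaries X d j; Z = cycles X d j in
     \<lparr>carrier = (\<lambda>z. {z \<oplus>\<^bsub>X j\<^esub> b | b. b \<in> B}) ` Z,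
      monoid.mult = undefined, one = undefined,
      zero = B,
      add = (\<lambda>U V. {u \<oplus>\<^bsub>X j\<^esub> v | u v. u \<in> U \<and> v \<in> V}),
      smult = (\<lambda>r U. {(r \<odot>\<^bsub>X j\<^esub> u) \<oplus>\<^bsub>X j\<^esub> b | u b. u \<in> U \<and> b \<in> B})\<rparr>)"

definition cx_nonzero :: "(int \<Rightarrow> ('r, 'b) module) \<Rightarrow> int \<Rightarrow> bool" where
  "cx_nonzero X i \<longleftrightarrow> \<not> is_zero_mod (X i)"

definition cx_inf :: "(int \<Rightarrow> ('r, 'b) module) \<Rightarrow> int" where
  "cx_inf X = Inf {i. cx_nonzero X i}"

text \<open>Finite quasi-projective resolution of M in R-mod: a nonzero complex of projective
  objects, bounded below and above (inf > -infinity, sup < infinity), with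
  H_j(X) isomorphic to M^(n_j) for all j >= inf X, not all n_j zero.\<close>
definition fin_qp_resolution :: "'r ring \<Rightarrow> ('r, 'm) module \<Rightarrow>
    (int \<Rightarrow> ('r, 'b) module) \<Rightarrow> (int \<Rightarrow> 'b \<Rightarrow> 'b) \<Rightarrow> bool" where
  "fin_qp_resolution R M X d \<longleftrightarrow>
     is_complex R X d \<and> (\<forall>i. projective R (X i)) \<and>
     (\<exists>i. cx_nonzero X i) \<and>
     (\<exists>a. \<forall>i. cx_nonzero X i \<longrightarrow> a \<le> i) \<and>
     (\<exists>b. \<forall>i. cx_nonzero X i \<longrightarrow> i \<le> b) \<and>
     (\<exists>n :: int \<Rightarrow> nat.
        (\<forall>j\<ge>cx_inf X. mod_iso R (homology X d j) (pow_mod M (n j))) \<and>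
        (\<exists>j\<ge>cx_inf X. n j \<noteq> 0))"

definition proj_resolution :: "'r ring \<Rightarrow> ('r, 'm) module \<Rightarrow>
    (nat \<Rightarrow> ('r, 'q) module) \<Rightarrow> (nat \<Rightarrow> 'q \<Rightarrow> 'q) \<Rightarrow> ('q \<Rightarrow> 'm) \<Rightarrow> bool" where
  "proj_resolution R M Q e \<epsilon> \<longleftrightarrow>
     (\<forall>n. projective R (Q n)) \<and>
     (\<forall>n\<ge>1. lin_map R (Q n) (Q (n - 1)) (e n)) \<and>
     lin_map R (Q 0) M \<epsilon> \<and> \<epsilon> ` carrier (Q 0) = carrier M \<and>
     {x \<in> carrier (Q 0). \<epsilon> x = \<zero>\<^bsub>M\<^esub>} = e 1 ` carrier (Q 1) \<and>
     (\<forall>n\<ge>1. {x \<in> carrier (Q n). e n x = \<zero>\<^bsub>Q (n - 1)\<^esub>} = e (n + 1) ` carrier (Q (n + 1)))"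

text \<open>Ext^n_R(M,N) = H^n(Hom_R(Q,N)) = 0 for all n >= 1, where Q is a projective
  resolution of M: every n-cocycle of Hom_R(Q,N) is a coboundary.\<close>
definition ext_vanish_pos :: "'r ring \<Rightarrow> (nat \<Rightarrow> ('r, 'q) module) \<Rightarrow> (nat \<Rightarrow> 'q \<Rightarrow> 'q) \<Rightarrow>
    ('r, 'n) module \<Rightarrow> bool" where
  "ext_vanish_pos R Q e N \<longleftrightarrow>
     (\<forall>n\<ge>1. \<forall>\<phi>. lin_map R (Q n) N \<phi> \<and>
        (\<forall>x\<in>carrier (Q (n + 1)). \<phi> (e (n + 1) x) = \<zero>\<^bsub>N\<^esub>) \<longrightarrow>
        (\<exists>\<psi>. lin_map R (Q (n - 1)) N \<psi> \<and> (\<forall>x\<in>carrier (Q n). \<phi> x = \<psi> (e n x))))"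

end

theory Submission
  imports Defs "HOL-Algebra.AbelCoset"
begin

text \<open>
  Let \<open>X\<close> be a finite quasi-projective resolution of \<open>M\<close> and \<open>j0\<close> the lowest degree in which
  its homology is nonzero, so \<open>H\<^sub>j\<^sub>0(X) \<cong> M\<^sup>n\<close> with \<open>n > 0\<close> and \<open>X\<close> is exact below \<open>j0\<close>.
  An exact, bounded below complex of projectives splits, so the cycles \<open>Z\<^sub>j\<^sub>0\<close> are a direct summand
  of \<open>X\<^sub>j\<^sub>0\<close>; followed by \<open>H\<^sub>j\<^sub>0(X) \<cong> M\<^sup>n\<close> and a coordinate projection this gives
  \<open>\<rho> : X\<^sub>j\<^sub>0 \<rightarrow> M\<close>.
  Conversely, the inclusion of \<open>M\<close> as a coordinate of \<open>M\<^sup>n\<close> lifts to \<open>\<sigma> : M \<rightarrow> Z\<^sub>j\<^sub>0\<close>: along a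
  projective resolution \<open>Q\<close> of \<open>M\<close> one builds a chain map from \<open>Q\<close> to \<open>X\<close> shifted by \<open>j0\<close>,
  the obstructions lying in \<open>Ext\<^sup>k(M, M\<^sup>n) = 0\<close>; since \<open>X\<close> is bounded above, one then descends,
  correcting by boundaries with \<open>Ext\<^sup>k(M, X\<^sub>i) = 0\<close> (the \<open>X\<^sub>i\<close> are summands of some \<open>R\<^sup>m\<close>),
  until the degree 0 component kills the image of \<open>Q\<^sub>1\<close> and so factors through \<open>M\<close>.
  Then \<open>\<rho> \<circ> \<sigma> = id\<close>, so \<open>M\<close> is a retract of the projective module \<open>X\<^sub>j\<^sub>0\<close>.
  Coherence of \<open>R\<close> only makes the finitely presented modules an abelian category; the argument
  does not use it.
\<close>

lemma left_module_ring: "left_module R M \<Longrightarrow> ring R"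
  by (simp add: left_module_def)

lemma left_module_abelian_group: "left_module R M \<Longrightarrow> abelian_group M"
  by (simp add: left_module_def)

lemma left_module_smult_closed:
  "left_module R M \<Longrightarrow> a \<in> carrier R \<Longrightarrow> x \<in> carrier M \<Longrightarrow> a \<odot>\<^bsub>M\<^esub> x \<in> carrier M"
  by (simp add: left_module_def module_axioms_def)

lemma left_module_smult_l_distr:
  "left_module R M \<Longrightarrow> a \<in> carrier R \<Longrightarrow> b \<in> carrier R \<Longrightarrow> x \<in> carrier M \<Longrightarrow>
   (a \<oplus>\<^bsub>R\<^esub> b) \<odot>\<^bsub>M\<^esub> x = a \<odot>\<^bsub>M\<^esub> x \<oplus>\<^bsub>M\<^esub> b \<odot>\<^bsub>M\<^esub> x"
  by (simp add: left_module_def module_axioms_def)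

lemma left_module_smult_r_distr:
  "left_module R M \<Longrightarrow> a \<in> carrier R \<Longrightarrow> x \<in> carrier M \<Longrightarrow> y \<in> carrier M \<Longrightarrow>
   a \<odot>\<^bsub>M\<^esub> (x \<oplus>\<^bsub>M\<^esub> y) = a \<odot>\<^bsub>M\<^esub> x \<oplus>\<^bsub>M\<^esub> a \<odot>\<^bsub>M\<^esub> y"
  by (simp add: left_module_def module_axioms_def)

lemma left_module_smult_assoc1:
  "left_module R M \<Longrightarrow> a \<in> carrier R \<Longrightarrow> b \<in> carrier R \<Longrightarrow> x \<in> carrier M \<Longrightarrow>
   (a \<otimes>\<^bsub>R\<^esub> b) \<odot>\<^bsub>M\<^esub> x = a \<odot>\<^bsub>M\<^esub> (b \<odot>\<^bsub>M\<^esub> x)"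
  by (simp add: left_module_def module_axioms_def)

lemma left_module_smult_one: "left_module R M \<Longrightarrow> x \<in> carrier M \<Longrightarrow> \<one>\<^bsub>R\<^esub> \<odot>\<^bsub>M\<^esub> x = x"
  by (simp add: left_module_def module_axioms_def)

lemma additive_abelian_group_hom:
  assumes "abelian_group A" and "abelian_group B"
    and "\<And>x. x \<in> carrier A \<Longrightarrow> f x \<in> carrier B"
    and "\<And>x y. x \<in> carrier A \<Longrightarrow> y \<in> carrier A \<Longrightarrow> f (x \<oplus>\<^bsub>A\<^esub> y) = f x \<oplus>\<^bsub>B\<^esub> f y"
  shows "abelian_group_hom A B f"
  using assms
  by (intro abelian_group_homI group_hom.intro group_hom_axioms.intro homI)
     (auto simp: abelian_group.a_group)

lemma abelian_group_minus_eq_zero_iff: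
  "abelian_group M \<Longrightarrow> x \<in> carrier M \<Longrightarrow> y \<in> carrier M \<Longrightarrow> x \<ominus>\<^bsub>M\<^esub> y = \<zero>\<^bsub>M\<^esub> \<longleftrightarrow> x = y"
  by (metis abelian_group.minus_eq abelian_group.r_neg abelian_group.a_inv_closed
      abelian_group.minus_equality abelian_group.minus_minus)

lemma abelian_group_minus_zero:
  assumes "abelian_group M" and "x \<in> carrier M"
  shows "x \<ominus>\<^bsub>M\<^esub> \<zero>\<^bsub>M\<^esub> = x"
proof -
  interpret abelian_group M by fact
  show ?thesis using assms(2) by (simp add: minus_eq)
qed

lemma (in abelian_group_hom) hom_minus:
  "x \<in> carrier G \<Longrightarrow> y \<in> carrier G \<Longrightarrow> h (x \<ominus>\<^bsub>G\<^esub> y) = h x \<ominus>\<^bsub>H\<^esub> h y"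
  by (simp add: G.minus_eq H.minus_eq)

lemma (in abelian_group_hom) hom_finsum:
  "finite I \<Longrightarrow> F \<in> I \<rightarrow> carrier G \<Longrightarrow> h (finsum G F I) = finsum H (\<lambda>i. h (F i)) I"
  by (induction I rule: finite_induct) (auto simp: Pi_iff)

lemma left_module_smult_hom:
  "left_module R M \<Longrightarrow> a \<in> carrier R \<Longrightarrow> abelian_group_hom M M (\<lambda>x. a \<odot>\<^bsub>M\<^esub> x)"
  by (intro additive_abelian_group_hom)
     (simp_all add: left_module_abelian_group left_module_smult_closed left_module_smult_r_distr)

lemma left_module_smult_r_null: "left_module R M \<Longrightarrow> a \<in> carrier R \<Longrightarrow> a \<odot>\<^bsub>M\<^esub> \<zero>\<^bsub>M\<^esub> = \<zero>\<^bsub>M\<^esub>"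
  using abelian_group_hom.hom_zero[OF left_module_smult_hom] .

lemma lin_mapD:
  assumes "lin_map R A B f"
  shows "\<And>x. x \<in> carrier A \<Longrightarrow> f x \<in> carrier B"
    and "\<And>x y. x \<in> carrier A \<Longrightarrow> y \<in> carrier A \<Longrightarrow> f (x \<oplus>\<^bsub>A\<^esub> y) = f x \<oplus>\<^bsub>B\<^esub> f y"
    and "\<And>r x. r \<in> carrier R \<Longrightarrow> x \<in> carrier A \<Longrightarrow> f (r \<odot>\<^bsub>A\<^esub> x) = r \<odot>\<^bsub>B\<^esub> f x"
  using assms by (auto simp: lin_map_def)

lemma lin_mapI:
  assumes "\<And>x. x \<in> carrier A \<Longrightarrow> f x \<in> carrier B"
    and "\<And>x y. x \<in> carrier A \<Longrightarrow> y \<in> carrier A \<Longrightarrow> f (x \<oplus>\<^bsub>A\<^esub> y) = f x \<oplus>\<^bsub>B\<^esub> f y"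
    and "\<And>r x. r \<in> carrier R \<Longrightarrow> x \<in> carrier A \<Longrightarrow> f (r \<odot>\<^bsub>A\<^esub> x) = r \<odot>\<^bsub>B\<^esub> f x"
  shows "lin_map R A B f"
  using assms by (auto simp: lin_map_def)

lemma lin_map_abelian_group_hom:
  "left_module R A \<Longrightarrow> left_module R B \<Longrightarrow> lin_map R A B f \<Longrightarrow> abelian_group_hom A B f"
  by (intro additive_abelian_group_hom) (auto simp: left_module_abelian_group dest: lin_mapD)

lemma lin_map_zero:
  "left_module R A \<Longrightarrow> left_module R B \<Longrightarrow> lin_map R A B f \<Longrightarrow> f \<zero>\<^bsub>A\<^esub> = \<zero>\<^bsub>B\<^esub>"
  using abelian_group_hom.hom_zero[OF lin_map_abelian_group_hom] .

lemma lin_map_minus: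
  "left_module R A \<Longrightarrow> left_module R B \<Longrightarrow> lin_map R A B f \<Longrightarrow> x \<in> carrier A \<Longrightarrow> y \<in> carrier A \<Longrightarrow>
   f (x \<ominus>\<^bsub>A\<^esub> y) = f x \<ominus>\<^bsub>B\<^esub> f y"
  using abelian_group_hom.hom_minus[OF lin_map_abelian_group_hom] .

lemma lin_map_comp: "lin_map R A B f \<Longrightarrow> lin_map R B C g \<Longrightarrow> lin_map R A C (\<lambda>x. g (f x))"
  unfolding lin_map_def by (auto simp: Pi_iff)

lemma lin_map_const_zero: "left_module R B \<Longrightarrow> lin_map R A B (\<lambda>x. \<zero>\<^bsub>B\<^esub>)"
  by (rule lin_mapI) (auto simp: left_module_smult_r_null left_module_abelian_group abelian_group.axioms(1)
      abelian_monoid.zero_closed abelian_monoid.r_zero)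

lemma lin_map_diff:
  assumes f: "lin_map R A B f" and g: "lin_map R A B g" and B: "left_module R B"
  shows "lin_map R A B (\<lambda>x. f x \<ominus>\<^bsub>B\<^esub> g x)"
proof (rule lin_mapI)
  interpret B: abelian_group B using left_module_abelian_group[OF B] .
  fix x y assume "x \<in> carrier A" "y \<in> carrier A"
  then show "f (x \<oplus>\<^bsub>A\<^esub> y) \<ominus>\<^bsub>B\<^esub> g (x \<oplus>\<^bsub>A\<^esub> y) = (f x \<ominus>\<^bsub>B\<^esub> g x) \<oplus>\<^bsub>B\<^esub> (f y \<ominus>\<^bsub>B\<^esub> g y)"
    using lin_mapD[OF f] lin_mapD[OF g] by (simp add: B.minus_eq B.minus_add B.a_ac)
next
  fix r x assume "r \<in> carrier R" "x \<in> carrier A"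
  then show "f (r \<odot>\<^bsub>A\<^esub> x) \<ominus>\<^bsub>B\<^esub> g (r \<odot>\<^bsub>A\<^esub> x) = r \<odot>\<^bsub>B\<^esub> (f x \<ominus>\<^bsub>B\<^esub> g x)"
    using lin_mapD[OF f] lin_mapD[OF g] abelian_group_hom.hom_minus[OF left_module_smult_hom[OF B]] by simp
qed (use lin_mapD[OF f] lin_mapD[OF g] B in \<open>simp add: abelian_group.minus_closed left_module_abelian_group\<close>)

lemma left_module_submoduleI:
  assumes "S \<subseteq> carrier A" "\<zero>\<^bsub>A\<^esub> \<in> S" "\<And>x. x \<in> S \<Longrightarrow> \<ominus>\<^bsub>A\<^esub> x \<in> S"
    "\<And>x y. x \<in> S \<Longrightarrow> y \<in> S \<Longrightarrow> x \<oplus>\<^bsub>A\<^esub> y \<in> S"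
    "\<And>r x. r \<in> carrier R \<Longrightarrow> x \<in> S \<Longrightarrow> r \<odot>\<^bsub>A\<^esub> x \<in> S"
  shows "submodule S R A"
  using assms by (auto intro!: submodule.intro subgroup.intro submodule_axioms.intro simp: a_inv_def[symmetric])

lemma submoduleD:
  assumes "submodule S R A"
  shows "S \<subseteq> carrier A" "\<zero>\<^bsub>A\<^esub> \<in> S" "\<And>x. x \<in> S \<Longrightarrow> \<ominus>\<^bsub>A\<^esub> x \<in> S"
    "\<And>x y. x \<in> S \<Longrightarrow> y \<in> S \<Longrightarrow> x \<oplus>\<^bsub>A\<^esub> y \<in> S"
    "\<And>r x. r \<in> carrier R \<Longrightarrow> x \<in> S \<Longrightarrow> r \<odot>\<^bsub>A\<^esub> x \<in> S"
  using assms subgroup.subset[OF submodule.axioms(1)[OF assms]]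
  by (auto simp: submodule_def submodule_axioms_def subgroup_def a_inv_def)

lemma carrier_submodule: "left_module R A \<Longrightarrow> submodule (carrier A) R A"
  by (rule left_module_submoduleI)
     (auto simp: left_module_smult_closed left_module_abelian_group abelian_group.a_inv_closed
       abelian_group.axioms(1) abelian_monoid.zero_closed abelian_monoid.a_closed)

lemma submod_carrier [simp]: "submod A (carrier A) = A"
  by (simp add: submod_def)

lemma submod_simps [simp]:
  "carrier (submod A S) = S" "zero (submod A S) = \<zero>\<^bsub>A\<^esub>"
  "add (submod A S) = add A" "smult (submod A S) = smult A"
  by (simp_all add: submod_def)

lemma left_module_submod:
  assumes A: "left_module R A" and S: "submodule S R A"
  shows "left_module R (submod A S)"
proof -
  interpret abelian_group A using left_module_abelian_group[OF A] .
  note S' = submoduleD[OF S]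
  have "\<exists>y\<in>S. y \<oplus>\<^bsub>A\<^esub> x = \<zero>\<^bsub>A\<^esub>" "\<exists>y\<in>S. x \<oplus>\<^bsub>A\<^esub> y = \<zero>\<^bsub>A\<^esub>" if "x \<in> S" for x
    using S' that by (metis l_neg r_neg subsetD)+
  then have "abelian_group (submod A S)"
    by (intro abelian_groupI) (use S' in \<open>auto simp: a_ac subsetD\<close>)
  moreover have "module_axioms R (submod A S)"
    using A S'(1) unfolding left_module_def module_axioms_def by (auto simp: S'(5) subsetD)
  ultimately show ?thesis using left_module_ring[OF A] by (simp add: left_module_def)
qed

lemma lin_map_submod_iff:
  "S \<subseteq> carrier A \<Longrightarrow> lin_map R P (submod A S) h \<longleftrightarrow> lin_map R P A h \<and> (\<forall>x\<in>carrier P. h x \<in> S)"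
  unfolding lin_map_def by auto

lemma lin_map_submodD:
  assumes "lin_map R P (submod A S) h" and "S \<subseteq> carrier A"
  shows "lin_map R P A h" and "\<And>x. x \<in> carrier P \<Longrightarrow> h x \<in> S"
  using assms unfolding lin_map_def by auto

lemma submod_minus:
  assumes A: "left_module R A" and S: "submodule S R A" and x: "x \<in> S" and y: "y \<in> S"
  shows "x \<ominus>\<^bsub>submod A S\<^esub> y = x \<ominus>\<^bsub>A\<^esub> y"
proof -
  interpret A: abelian_group A using left_module_abelian_group[OF A] .
  interpret abelian_group "submod A S" using left_module_abelian_group[OF left_module_submod[OF A S]] .
  note S' = submoduleD[OF S]
  have "\<ominus>\<^bsub>A\<^esub> y \<oplus>\<^bsub>submod A S\<^esub> y = \<zero>\<^bsub>submod A S\<^esub>" using y S'(1) by (simp add: A.l_neg subsetD)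
  then have "\<ominus>\<^bsub>submod A S\<^esub> y = \<ominus>\<^bsub>A\<^esub> y" using y S'(3) by (intro minus_equality) simp_all
  then show ?thesis by (simp add: a_minus_def)
qed

lemma lin_map_kernel_submodule:
  assumes A: "left_module R A" and B: "left_module R B" and f: "lin_map R A B f"
  shows "submodule {x \<in> carrier A. f x = \<zero>\<^bsub>B\<^esub>} R A"
proof -
  have hom: "abelian_group_hom A B f" using lin_map_abelian_group_hom[OF A B f] .
  have "subgroup {x \<in> carrier A. f x = \<zero>\<^bsub>B\<^esub>} (add_monoid A)"
    using abelian_group_hom.additive_subgroup_a_kernel[OF hom] by (simp add: additive_subgroup_def a_kernel_def')
  moreover have "r \<odot>\<^bsub>A\<^esub> x \<in> {x \<in> carrier A. f x = \<zero>\<^bsub>B\<^esub>}"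
    if "r \<in> carrier R" "x \<in> {x \<in> carrier A. f x = \<zero>\<^bsub>B\<^esub>}" for r x
    using that lin_mapD(3)[OF f] left_module_smult_closed[OF A] left_module_smult_r_null[OF B] by simp
  ultimately show ?thesis by (intro submodule.intro submodule_axioms.intro)
qed

lemma lin_map_image_submodule:
  assumes A: "left_module R A" and B: "left_module R B" and f: "lin_map R A B f"
  shows "submodule (f ` carrier A) R B"
proof -
  have hom: "abelian_group_hom A B f" using lin_map_abelian_group_hom[OF A B f] .
  have "subgroup (f ` carrier A) (add_monoid B)"
    using group_hom.img_is_subgroup[OF abelian_group_hom.a_group_hom[OF hom]] by simp
  moreover have "r \<odot>\<^bsub>B\<^esub> y \<in> f ` carrier A" if "r \<in> carrier R" "y \<in> f ` carrier A" for r y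
  proof -
    from that(2) obtain x where x: "x \<in> carrier A" "y = f x" by blast
    then have "r \<odot>\<^bsub>B\<^esub> y = f (r \<odot>\<^bsub>A\<^esub> x)" using lin_mapD(3)[OF f that(1)] by simp
    then show ?thesis using left_module_smult_closed[OF A that(1) x(1)] by blast
  qed
  ultimately show ?thesis by (intro submodule.intro submodule_axioms.intro)
qed

lemma ring_mod_simps [simp]:
  "carrier (ring_mod R) = carrier R" "zero (ring_mod R) = \<zero>\<^bsub>R\<^esub>"
  "add (ring_mod R) = add R" "smult (ring_mod R) = monoid.mult R"
  by (simp_all add: ring_mod_def)

lemma pow_mod_simps [simp]:
  "carrier (pow_mod M n) = {f. (\<forall>i<n. f i \<in> carrier M) \<and> (\<forall>i\<ge>n. f i = \<zero>\<^bsub>M\<^esub>)}"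
  "zero (pow_mod M n) = (\<lambda>i. \<zero>\<^bsub>M\<^esub>)"
  "add (pow_mod M n) = (\<lambda>f g i. f i \<oplus>\<^bsub>M\<^esub> g i)"
  "smult (pow_mod M n) = (\<lambda>r f i. r \<odot>\<^bsub>M\<^esub> f i)"
  by (simp_all add: pow_mod_def)

lemma free_mod_simps [simp]:
  "carrier (free_mod R n) = {f. (\<forall>i<n. f i \<in> carrier R) \<and> (\<forall>i\<ge>n. f i = \<zero>\<^bsub>R\<^esub>)}"
  "zero (free_mod R n) = (\<lambda>i. \<zero>\<^bsub>R\<^esub>)"
  "add (free_mod R n) = (\<lambda>f g i. f i \<oplus>\<^bsub>R\<^esub> g i)"
  "smult (free_mod R n) = (\<lambda>r f i. r \<otimes>\<^bsub>R\<^esub> f i)"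
  by (simp_all add: free_mod_def)

lemma dsum_simps [simp]:
  "carrier (dsum M N) = carrier M \<times> carrier N"
  "zero (dsum M N) = (\<zero>\<^bsub>M\<^esub>, \<zero>\<^bsub>N\<^esub>)"
  "add (dsum M N) = (\<lambda>p q. (fst p \<oplus>\<^bsub>M\<^esub> fst q, snd p \<oplus>\<^bsub>N\<^esub> snd q))"
  "smult (dsum M N) = (\<lambda>r p. (r \<odot>\<^bsub>M\<^esub> fst p, r \<odot>\<^bsub>N\<^esub> snd p))"
  by (simp_all add: dsum_def)

lemma left_module_ring_mod: "ring R \<Longrightarrow> left_module R (ring_mod R)"
proof -
  assume R: "ring R"
  interpret ring R by (rule R)
  have "abelian_group (ring_mod R)"
    by (rule abelian_groupI) (auto simp: a_ac intro: l_neg)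
  then show ?thesis
    unfolding left_module_def module_axioms_def using R by (auto simp: l_distr r_distr m_assoc)
qed

lemma left_module_pow_mod:
  assumes M: "left_module R M"
  shows "left_module R (pow_mod M n)"
proof -
  interpret abelian_group M using left_module_abelian_group[OF M] .
  have coord: "\<And>x i. \<forall>i<n. x i \<in> carrier M \<Longrightarrow> \<forall>i\<ge>n. x i = \<zero>\<^bsub>M\<^esub> \<Longrightarrow> x i \<in> carrier M"
    by (metis not_le zero_closed)
  have "abelian_group (pow_mod M n)"
  proof (rule abelian_groupI, goal_cases)
    case (6 x)
    show ?case
    proof (intro bexI[of _ "\<lambda>i. \<ominus>\<^bsub>M\<^esub> x i"])
      show "(\<lambda>i. \<ominus>\<^bsub>M\<^esub> x i) \<oplus>\<^bsub>pow_mod M n\<^esub> x = \<zero>\<^bsub>pow_mod M n\<^esub>"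
        using 6 by (auto intro!: ext simp: l_neg coord)
    qed (use 6 in auto)
  qed (auto intro!: ext simp: a_ac coord)
  moreover have "module_axioms R (pow_mod M n)"
    unfolding module_axioms_def
    using M by (auto intro!: ext simp: left_module_smult_closed left_module_smult_l_distr left_module_smult_r_distr
        left_module_smult_assoc1 left_module_smult_one left_module_smult_r_null coord)
  ultimately show ?thesis using left_module_ring[OF M] by (simp add: left_module_def)
qed

lemma left_module_free_mod: "ring R \<Longrightarrow> left_module R (free_mod R n)"
  by (simp add: free_mod_def left_module_pow_mod left_module_ring_mod)

lemma lin_map_pow_mod_coord: "i < n \<Longrightarrow> lin_map R (pow_mod M n) M (\<lambda>f. f i)"
  by (rule lin_mapI) auto

lemma lin_map_pow_mod_incl:
  assumes M: "left_module R M" and "i < n"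
  shows "lin_map R M (pow_mod M n) (\<lambda>m j. if j = i then m else \<zero>\<^bsub>M\<^esub>)"
proof -
  interpret abelian_group M using left_module_abelian_group[OF M] .
  show ?thesis
    using assms by (intro lin_mapI) (auto intro!: ext simp: left_module_smult_r_null)
qed

definition free_basis :: "'r ring \<Rightarrow> nat \<Rightarrow> nat \<Rightarrow> 'r" where
  "free_basis R k = (\<lambda>i. if i = k then \<one>\<^bsub>R\<^esub> else \<zero>\<^bsub>R\<^esub>)"

lemma free_basis_carrier: "ring R \<Longrightarrow> k < n \<Longrightarrow> free_basis R k \<in> carrier (free_mod R n)"
  by (auto simp: free_basis_def ring.ring_simprules)

lemma free_mod_expansion:
  assumes R: "ring R" and x: "x \<in> carrier (free_mod R n)"
  shows "x = (\<Oplus>\<^bsub>free_mod R n\<^esub>i\<in>{..<n}. x i \<odot>\<^bsub>free_mod R n\<^esub> free_basis R i)"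
proof
  fix j
  interpret ring R by (rule R)
  interpret F: abelian_group "free_mod R n" using left_module_abelian_group[OF left_module_free_mod[OF R]] .
  interpret Rm: abelian_group "ring_mod R" using left_module_abelian_group[OF left_module_ring_mod[OF R]] .
  have coord: "y j \<in> carrier R" if "y \<in> carrier (free_mod R n)" for y
    using that by (cases "j < n") auto
  have hom: "abelian_group_hom (free_mod R n) (ring_mod R) (\<lambda>y. y j)"
    by (intro additive_abelian_group_hom F.abelian_group_axioms Rm.abelian_group_axioms)
       (simp only: ring_mod_simps coord, simp)
  have terms: "(\<lambda>i. x i \<odot>\<^bsub>free_mod R n\<^esub> free_basis R i) \<in> {..<n} \<rightarrow> carrier (free_mod R n)"
    using x free_basis_carrier[OF R] left_module_smult_closed[OF left_module_free_mod[OF R]] by auto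
  have "(\<Oplus>\<^bsub>free_mod R n\<^esub>i\<in>{..<n}. x i \<odot>\<^bsub>free_mod R n\<^esub> free_basis R i) j
      = (\<Oplus>\<^bsub>ring_mod R\<^esub>i\<in>{..<n}. x i \<otimes>\<^bsub>R\<^esub> free_basis R i j)"
    using abelian_group_hom.hom_finsum[OF hom _ terms] by simp
  also have "\<dots> = (\<Oplus>\<^bsub>ring_mod R\<^esub>i\<in>{..<n}. if j = i then x i else \<zero>\<^bsub>R\<^esub>)"
    using x by (intro Rm.finsum_cong') (auto simp: free_basis_def)
  also have "\<dots> = x j"
  proof (cases "j < n")
    case True
    then show ?thesis using x Rm.finsum_singleton[of j "{..<n}" x] by (simp add: Pi_iff cong: if_cong)
  next
    case False
    then have "(\<Oplus>\<^bsub>ring_mod R\<^esub>i\<in>{..<n}. if j = i then x i else \<zero>\<^bsub>R\<^esub>) = (\<Oplus>\<^bsub>ring_mod R\<^esub>i\<in>{..<n}. \<zero>\<^bsub>ring_mod R\<^esub>)"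
      by (intro Rm.finsum_cong') auto
    then show ?thesis using x False Rm.finsum_zero[of "{..<n}"] by simp
  qed
  finally show "x j = (\<Oplus>\<^bsub>free_mod R n\<^esub>i\<in>{..<n}. x i \<odot>\<^bsub>free_mod R n\<^esub> free_basis R i) j" ..
qed

lemma lin_map_free_mod_expansion:
  assumes B: "left_module R B" and f: "lin_map R (free_mod R n) B f" and x: "x \<in> carrier (free_mod R n)"
  shows "f x = (\<Oplus>\<^bsub>B\<^esub>i\<in>{..<n}. x i \<odot>\<^bsub>B\<^esub> f (free_basis R i))"
proof -
  have R: "ring R" using left_module_ring[OF B] .
  note F = left_module_free_mod[OF R]
  interpret B: abelian_group B using left_module_abelian_group[OF B] .
  have xi: "\<And>i. i < n \<Longrightarrow> x i \<in> carrier R" using x by simp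
  have "f x = f (\<Oplus>\<^bsub>free_mod R n\<^esub>i\<in>{..<n}. x i \<odot>\<^bsub>free_mod R n\<^esub> free_basis R i)"
    by (rule arg_cong[where f = f, OF free_mod_expansion[OF R x]])
  also have "\<dots> = (\<Oplus>\<^bsub>B\<^esub>i\<in>{..<n}. f (x i \<odot>\<^bsub>free_mod R n\<^esub> free_basis R i))"
    by (intro abelian_group_hom.hom_finsum[OF lin_map_abelian_group_hom[OF F B f]] Pi_I left_module_smult_closed[OF F])
       (auto simp: xi free_basis_carrier[OF R] simp del: free_mod_simps)
  also have "\<dots> = (\<Oplus>\<^bsub>B\<^esub>i\<in>{..<n}. x i \<odot>\<^bsub>B\<^esub> f (free_basis R i))"
    using xi free_basis_carrier[OF R] lin_mapD(1,3)[OF f] left_module_smult_closed[OF B]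
    by (intro B.finsum_cong') auto
  finally show ?thesis .
qed

lemma lin_map_free_combination:
  assumes A: "left_module R A" and a: "\<And>i. i < n \<Longrightarrow> a i \<in> carrier A"
  shows "lin_map R (free_mod R n) A (\<lambda>x. \<Oplus>\<^bsub>A\<^esub>i\<in>{..<n}. x i \<odot>\<^bsub>A\<^esub> a i)"
proof -
  interpret A: abelian_group A using left_module_abelian_group[OF A] .
  have terms: "(\<lambda>i. x i \<odot>\<^bsub>A\<^esub> a i) \<in> {..<n} \<rightarrow> carrier A" if "x \<in> carrier (free_mod R n)" for x
    using that a by (auto simp: left_module_smult_closed[OF A])
  show ?thesis
  proof (rule lin_mapI)
    fix x assume "x \<in> carrier (free_mod R n)"
    then show "(\<Oplus>\<^bsub>A\<^esub>i\<in>{..<n}. x i \<odot>\<^bsub>A\<^esub> a i) \<in> carrier A" using terms by (intro A.finsum_closed)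
  next
    fix x y assume x: "x \<in> carrier (free_mod R n)" and y: "y \<in> carrier (free_mod R n)"
    have "(\<Oplus>\<^bsub>A\<^esub>i\<in>{..<n}. (x \<oplus>\<^bsub>free_mod R n\<^esub> y) i \<odot>\<^bsub>A\<^esub> a i)
        = (\<Oplus>\<^bsub>A\<^esub>i\<in>{..<n}. x i \<odot>\<^bsub>A\<^esub> a i \<oplus>\<^bsub>A\<^esub> y i \<odot>\<^bsub>A\<^esub> a i)"
      using x y a terms[OF x] terms[OF y]
      by (intro A.finsum_cong') (auto simp: left_module_smult_l_distr[OF A] Pi_iff)
    then show "(\<Oplus>\<^bsub>A\<^esub>i\<in>{..<n}. (x \<oplus>\<^bsub>free_mod R n\<^esub> y) i \<odot>\<^bsub>A\<^esub> a i)
        = (\<Oplus>\<^bsub>A\<^esub>i\<in>{..<n}. x i \<odot>\<^bsub>A\<^esub> a i) \<oplus>\<^bsub>A\<^esub> (\<Oplus>\<^bsub>A\<^esub>i\<in>{..<n}. y i \<odot>\<^bsub>A\<^esub> a i)"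
      using terms[OF x] terms[OF y] by (simp add: A.finsum_addf)
  next
    fix r x assume r: "r \<in> carrier R" and x: "x \<in> carrier (free_mod R n)"
    have "(\<Oplus>\<^bsub>A\<^esub>i\<in>{..<n}. (r \<odot>\<^bsub>free_mod R n\<^esub> x) i \<odot>\<^bsub>A\<^esub> a i)
        = (\<Oplus>\<^bsub>A\<^esub>i\<in>{..<n}. r \<odot>\<^bsub>A\<^esub> (x i \<odot>\<^bsub>A\<^esub> a i))"
      using r x a
      by (intro A.finsum_cong') (auto simp: left_module_smult_assoc1[OF A] left_module_smult_closed[OF A])
    then show "(\<Oplus>\<^bsub>A\<^esub>i\<in>{..<n}. (r \<odot>\<^bsub>free_mod R n\<^esub> x) i \<odot>\<^bsub>A\<^esub> a i)
        = r \<odot>\<^bsub>A\<^esub> (\<Oplus>\<^bsub>A\<^esub>i\<in>{..<n}. x i \<odot>\<^bsub>A\<^esub> a i)"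
      using abelian_group_hom.hom_finsum[OF left_module_smult_hom[OF A r] _ terms[OF x]] by simp
  qed
qed

lemma free_mod_lift:
  assumes A: "left_module R A" and B: "left_module R B"
    and g: "lin_map R A B g" and f: "lin_map R (free_mod R n) B f"
    and surj: "f ` carrier (free_mod R n) \<subseteq> g ` carrier A"
  shows "\<exists>h. lin_map R (free_mod R n) A h \<and> (\<forall>x\<in>carrier (free_mod R n). g (h x) = f x)"
proof -
  have R: "ring R" using left_module_ring[OF A] .
  interpret B: abelian_group B using left_module_abelian_group[OF B] .
  have "\<exists>y. y \<in> carrier A \<and> g y = f (free_basis R i)" if "i < n" for i
  proof -
    have "f (free_basis R i) \<in> g ` carrier A"
      using surj imageI[OF free_basis_carrier[OF R that], of f] by (rule subsetD)
    then show ?thesis by (auto simp del: free_mod_simps)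
  qed
  then obtain a where a: "\<And>i. i < n \<Longrightarrow> a i \<in> carrier A" "\<And>i. i < n \<Longrightarrow> g (a i) = f (free_basis R i)"
    by (metis (mono_tags))
  let ?h = "\<lambda>x. \<Oplus>\<^bsub>A\<^esub>i\<in>{..<n}. x i \<odot>\<^bsub>A\<^esub> a i"
  have "g (?h x) = f x" if x: "x \<in> carrier (free_mod R n)" for x
  proof -
    have xi: "\<And>i. i < n \<Longrightarrow> x i \<in> carrier R" using x by simp
    have "g (?h x) = (\<Oplus>\<^bsub>B\<^esub>i\<in>{..<n}. g (x i \<odot>\<^bsub>A\<^esub> a i))"
      using xi a left_module_smult_closed[OF A]
      by (intro abelian_group_hom.hom_finsum[OF lin_map_abelian_group_hom[OF A B g]]) auto
    also have "\<dots> = (\<Oplus>\<^bsub>B\<^esub>i\<in>{..<n}. x i \<odot>\<^bsub>B\<^esub> f (free_basis R i))"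
      using xi a lin_mapD(3)[OF g] free_basis_carrier[OF R] lin_mapD(1)[OF f] left_module_smult_closed[OF B]
      by (intro B.finsum_cong') auto
    also have "\<dots> = f x" using lin_map_free_mod_expansion[OF B f x] by simp
    finally show ?thesis .
  qed
  moreover have "lin_map R (free_mod R n) A ?h" by (rule lin_map_free_combination[OF A]) (rule a(1))
  ultimately show ?thesis by blast
qed

lemma projectiveD:
  assumes "projective R P"
  obtains n s p where "lin_map R P (free_mod R n) s" "lin_map R (free_mod R n) P p"
    "\<And>x. x \<in> carrier P \<Longrightarrow> p (s x) = x"
  using assms unfolding projective_def by blast

lemma projective_left_module: "projective R P \<Longrightarrow> left_module R P"
  by (simp add: projective_def fin_pres_def)

lemma projective_lift:
  assumes P: "projective R P" and A: "left_module R A" and B: "left_module R B"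
    and S: "submodule S R A" and g: "lin_map R (submod A S) B g" and f: "lin_map R P B f"
    and surj: "f ` carrier P \<subseteq> g ` S"
  shows "\<exists>h. lin_map R P A h \<and> (\<forall>x\<in>carrier P. h x \<in> S \<and> g (h x) = f x)"
proof -
  obtain n s p where s: "lin_map R P (free_mod R n) s" and p: "lin_map R (free_mod R n) P p"
    and ps: "\<And>x. x \<in> carrier P \<Longrightarrow> p (s x) = x" using projectiveD[OF P] by blast
  obtain h where h: "lin_map R (free_mod R n) (submod A S) h"
    and gh: "\<And>x. x \<in> carrier (free_mod R n) \<Longrightarrow> g (h x) = f (p x)"
    using free_mod_lift[OF left_module_submod[OF A S] B g lin_map_comp[OF p f]] surj lin_mapD(1)[OF p]
    by fastforce
  have "lin_map R P (submod A S) (\<lambda>x. h (s x))" using lin_map_comp[OF s h] .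
  then show ?thesis
    using lin_map_submod_iff[OF submoduleD(1)[OF S]] gh ps lin_mapD(1)[OF s] by metis
qed

lemma projective_lift_carrier:
  assumes "projective R P" and A: "left_module R A" and "left_module R B"
    and "lin_map R A B g" and "lin_map R P B f" and "f ` carrier P \<subseteq> g ` carrier A"
  shows "\<exists>h. lin_map R P A h \<and> (\<forall>x\<in>carrier P. g (h x) = f x)"
proof -
  have "\<exists>h. lin_map R P A h \<and> (\<forall>x\<in>carrier P. h x \<in> carrier A \<and> g (h x) = f x)"
    using projective_lift[OF assms(1-3) carrier_submodule[OF A], of g f] assms(4-6) by simp
  then show ?thesis by blast
qed

lemma projective_retract:
  assumes fp: "fin_pres R M" and P: "projective R P"
    and s: "lin_map R M P s" and p: "lin_map R P M p" and ps: "\<And>x. x \<in> carrier M \<Longrightarrow> p (s x) = x"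
  shows "projective R M"
proof -
  obtain n s' p' where s': "lin_map R P (free_mod R n) s'" and p': "lin_map R (free_mod R n) P p'"
    and ps': "\<And>x. x \<in> carrier P \<Longrightarrow> p' (s' x) = x" using projectiveD[OF P] by blast
  have "\<forall>x\<in>carrier M. p (p' (s' (s x))) = x" using ps ps' lin_mapD(1)[OF s] by simp
  then show ?thesis
    unfolding projective_def using fp lin_map_comp[OF s s'] lin_map_comp[OF p' p] by blast
qed

lemma zero_module_projective:
  assumes fp: "fin_pres R M" and z: "is_zero_mod M"
  shows "projective R M"
proof -
  have M: "left_module R M" using fp by (simp add: fin_pres_def)
  have "lin_map R M (free_mod R 0) (\<lambda>x. \<zero>\<^bsub>free_mod R 0\<^esub>)"
    by (rule lin_map_const_zero[OF left_module_free_mod[OF left_module_ring[OF M]]])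
  moreover have "lin_map R (free_mod R 0) M (\<lambda>x. \<zero>\<^bsub>M\<^esub>)" by (rule lin_map_const_zero[OF M])
  moreover have "\<forall>x\<in>carrier M. \<zero>\<^bsub>M\<^esub> = x" using z unfolding is_zero_mod_def by simp
  ultimately show ?thesis unfolding projective_def using fp by blast
qed

section \<open>Vanishing of Ext\<close>

lemma ext_vanish_posD:
  assumes "ext_vanish_pos R Q e N" and "lin_map R (Q (Suc k)) N \<phi>"
    and "\<And>x. x \<in> carrier (Q (Suc (Suc k))) \<Longrightarrow> \<phi> (e (Suc (Suc k)) x) = \<zero>\<^bsub>N\<^esub>"
  obtains \<psi> where "lin_map R (Q k) N \<psi>" "\<And>x. x \<in> carrier (Q (Suc k)) \<Longrightarrow> \<phi> x = \<psi> (e (Suc k) x)"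
  using assms unfolding ext_vanish_pos_def by (metis Suc_eq_plus1 diff_Suc_1 le_add2)

lemma ext_vanish_pos_retract:
  assumes ext: "ext_vanish_pos R Q e N" and N': "left_module R N'" and N: "left_module R N"
    and i: "lin_map R N' N i" and r: "lin_map R N N' r" and ri: "\<And>y. y \<in> carrier N' \<Longrightarrow> r (i y) = y"
  shows "ext_vanish_pos R Q e N'"
  unfolding ext_vanish_pos_def
proof (intro allI impI)
  fix n \<phi> assume n: "1 \<le> n" and \<phi>: "lin_map R (Q n) N' \<phi> \<and>
      (\<forall>x\<in>carrier (Q (n + 1)). \<phi> (e (n + 1) x) = \<zero>\<^bsub>N'\<^esub>)"
  have "lin_map R (Q n) N (\<lambda>x. i (\<phi> x)) \<and> (\<forall>x\<in>carrier (Q (n + 1)). i (\<phi> (e (n + 1) x)) = \<zero>\<^bsub>N\<^esub>)"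
    using \<phi> lin_map_comp[OF _ i] lin_map_zero[OF N' N i] by auto
  then obtain \<psi> where \<psi>: "lin_map R (Q (n - 1)) N \<psi>" "\<forall>x\<in>carrier (Q n). i (\<phi> x) = \<psi> (e n x)"
    using ext n unfolding ext_vanish_pos_def by blast
  have "\<forall>x\<in>carrier (Q n). \<phi> x = r (\<psi> (e n x))"
    using \<psi>(2) ri lin_mapD(1) \<phi> by metis
  then show "\<exists>\<psi>. lin_map R (Q (n - 1)) N' \<psi> \<and> (\<forall>x\<in>carrier (Q n). \<phi> x = \<psi> (e n x))"
    using lin_map_comp[OF \<psi>(1) r] by blast
qed

lemma ext_vanish_pos_pow_mod:
  assumes N: "left_module R N" and ext: "ext_vanish_pos R Q e N"
  shows "ext_vanish_pos R Q e (pow_mod N m)"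
  unfolding ext_vanish_pos_def
proof (intro allI impI)
  fix n \<phi> assume n: "1 \<le> n" and \<phi>: "lin_map R (Q n) (pow_mod N m) \<phi> \<and>
      (\<forall>x\<in>carrier (Q (n + 1)). \<phi> (e (n + 1) x) = \<zero>\<^bsub>pow_mod N m\<^esub>)"
  have "\<exists>\<psi>. lin_map R (Q (n - 1)) N \<psi> \<and> (\<forall>x\<in>carrier (Q n). \<phi> x j = \<psi> (e n x))" if j: "j < m" for j
  proof -
    have "lin_map R (Q n) N (\<lambda>x. \<phi> x j)"
      using \<phi> lin_map_comp[OF _ lin_map_pow_mod_coord[OF j]] by blast
    moreover have "\<forall>x\<in>carrier (Q (n + 1)). \<phi> (e (n + 1) x) j = \<zero>\<^bsub>N\<^esub>"
      using \<phi> by simp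
    ultimately show ?thesis
      using ext n unfolding ext_vanish_pos_def by blast
  qed
  then obtain \<psi> where \<psi>: "\<And>j. j < m \<Longrightarrow> lin_map R (Q (n - 1)) N (\<psi> j)"
    "\<And>j x. j < m \<Longrightarrow> x \<in> carrier (Q n) \<Longrightarrow> \<phi> x j = \<psi> j (e n x)"
    by metis
  interpret abelian_group N using left_module_abelian_group[OF N] .
  define \<Psi> where "\<Psi> x = (\<lambda>j. if j < m then \<psi> j x else \<zero>\<^bsub>N\<^esub>)" for x
  have "lin_map R (Q (n - 1)) (pow_mod N m) \<Psi>"
    using lin_mapD[OF \<psi>(1)] by (intro lin_mapI) (auto intro!: ext simp: \<Psi>_def left_module_smult_r_null[OF N])
  moreover have "\<phi> x = \<Psi> (e n x)" if x: "x \<in> carrier (Q n)" for x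
  proof
    fix j
    have "\<phi> x \<in> carrier (pow_mod N m)" using \<phi> x by (auto simp: lin_map_def)
    then show "\<phi> x j = \<Psi> (e n x) j" using \<psi>(2) x by (auto simp: \<Psi>_def)
  qed
  ultimately show "\<exists>\<psi>. lin_map R (Q (n - 1)) (pow_mod N m) \<psi> \<and> (\<forall>x\<in>carrier (Q n). \<phi> x = \<psi> (e n x))"
    by blast
qed

lemma ext_vanish_pos_dsumD:
  assumes ext: "ext_vanish_pos R Q e (dsum M N)" and M: "left_module R M" and N: "left_module R N"
  shows "ext_vanish_pos R Q e M" and "ext_vanish_pos R Q e N"
proof -
  interpret M: abelian_group M using left_module_abelian_group[OF M] .
  interpret N: abelian_group N using left_module_abelian_group[OF N] .
  have MN: "left_module R (dsum M N)"
    using M N unfolding left_module_def module_axioms_def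
    by (auto intro!: abelian_groupI simp: M.a_ac N.a_ac intro: M.l_neg N.l_neg)
  show "ext_vanish_pos R Q e M"
    by (rule ext_vanish_pos_retract[OF ext M MN, where i = "\<lambda>x. (x, \<zero>\<^bsub>N\<^esub>)" and r = fst])
       (auto intro!: lin_mapI simp: left_module_smult_r_null[OF N])
  show "ext_vanish_pos R Q e N"
    by (rule ext_vanish_pos_retract[OF ext N MN, where i = "\<lambda>x. (\<zero>\<^bsub>M\<^esub>, x)" and r = snd])
       (auto intro!: lin_mapI simp: left_module_smult_r_null[OF M])
qed

lemma ext_vanish_pos_projective:
  assumes R: "ring R" and ext: "ext_vanish_pos R Q e (ring_mod R)" and P: "projective R P"
  shows "ext_vanish_pos R Q e P"
proof -
  obtain n s p where s: "lin_map R P (free_mod R n) s" and p: "lin_map R (free_mod R n) P p"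
    and ps: "\<And>x. x \<in> carrier P \<Longrightarrow> p (s x) = x" using projectiveD[OF P] by blast
  have "ext_vanish_pos R Q e (free_mod R n)"
    unfolding free_mod_def by (rule ext_vanish_pos_pow_mod[OF left_module_ring_mod[OF R] ext])
  then show ?thesis
    using ext_vanish_pos_retract[OF _ projective_left_module[OF P] left_module_free_mod[OF R] s p] ps by blast
qed

section \<open>Complexes and their homology\<close>

locale chain_complex =
  fixes R :: "'r ring" and X :: "int \<Rightarrow> ('r, 'b) module" and d :: "int \<Rightarrow> 'b \<Rightarrow> 'b"
  assumes is_complex: "is_complex R X d"
begin

lemma left_module_X: "left_module R (X i)"
  using is_complex by (simp add: is_complex_def)

lemma abelian_group_X: "abelian_group (X i)"
  using left_module_abelian_group[OF left_module_X] .

lemma lin_map_d: "lin_map R (X i) (X (i - 1)) (d i)"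
  using is_complex by (simp add: is_complex_def)

lemma lin_map_d_succ: "lin_map R (X (i + 1)) (X i) (d (i + 1))"
  using lin_map_d[of "i + 1"] by simp

lemma d_d: "x \<in> carrier (X (i + 1)) \<Longrightarrow> d i (d (i + 1) x) = \<zero>\<^bsub>X (i - 1)\<^esub>"
proof -
  assume "x \<in> carrier (X (i + 1))"
  then have "d (i + 1 - 1) (d (i + 1) x) = \<zero>\<^bsub>X (i + 1 - 2)\<^esub>"
    using is_complex unfolding is_complex_def by blast
  then show ?thesis by simp
qed

lemma d_zero: "d i \<zero>\<^bsub>X i\<^esub> = \<zero>\<^bsub>X (i - 1)\<^esub>"
  using lin_map_zero[OF left_module_X left_module_X lin_map_d] .

lemma cycles_subset: "cycles X d j \<subseteq> carrier (X j)"
  by (auto simp: cycles_def)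

lemma d_in_cycles: "x \<in> carrier (X j) \<Longrightarrow> d j x \<in> cycles X d (j - 1)"
  using d_d[of x "j - 1"] lin_mapD(1)[OF lin_map_d] by (simp add: cycles_def)

lemma boundaries_subset_cycles: "boundaries X d j \<subseteq> cycles X d j"
  using d_in_cycles[of _ "j + 1"] lin_mapD(1)[OF lin_map_d_succ] by (auto simp: boundaries_def)

lemma submodule_cycles: "submodule (cycles X d j) R (X j)"
  using lin_map_kernel_submodule[OF left_module_X left_module_X lin_map_d] by (simp add: cycles_def)

lemma submodule_boundaries: "submodule (boundaries X d j) R (X j)"
  using lin_map_image_submodule[OF left_module_X left_module_X lin_map_d_succ] by (simp add: boundaries_def)

end

definition homology_class :: "(int \<Rightarrow> ('r, 'b) module) \<Rightarrow> (int \<Rightarrow> 'b \<Rightarrow> 'b) \<Rightarrow> int \<Rightarrow> 'b \<Rightarrow> 'b set" where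
  "homology_class X d j z = {z \<oplus>\<^bsub>X j\<^esub> b | b. b \<in> boundaries X d j}"

lemma homology_simps:
  "carrier (homology X d j) = homology_class X d j ` cycles X d j"
  "zero (homology X d j) = boundaries X d j"
  "add (homology X d j) = (\<lambda>U V. {u \<oplus>\<^bsub>X j\<^esub> v | u v. u \<in> U \<and> v \<in> V})"
  "smult (homology X d j) = (\<lambda>r U. {(r \<odot>\<^bsub>X j\<^esub> u) \<oplus>\<^bsub>X j\<^esub> b | u b. u \<in> U \<and> b \<in> boundaries X d j})"
  by (simp_all add: homology_def Let_def homology_class_def[abs_def])

text \<open>\<open>\<pi>\<close> induces an isomorphism from \<open>H\<^sub>j(X)\<close> onto \<open>N\<close>.\<close>
definition homology_quotient :: "'r ring \<Rightarrow> (int \<Rightarrow> ('r, 'b) module) \<Rightarrow> (int \<Rightarrow> 'b \<Rightarrow> 'b) \<Rightarrow> int \<Rightarrow>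
    ('r, 'n) module \<Rightarrow> ('b \<Rightarrow> 'n) \<Rightarrow> bool" where
  "homology_quotient R X d j N \<pi> \<longleftrightarrow> lin_map R (submod (X j) (cycles X d j)) N \<pi>
     \<and> \<pi> ` cycles X d j = carrier N
     \<and> (\<forall>z\<in>cycles X d j. \<pi> z = \<zero>\<^bsub>N\<^esub> \<longleftrightarrow> z \<in> boundaries X d j)"

context chain_complex
begin

lemma homology_class_eq_coset:
  assumes z: "z \<in> carrier (X j)"
  shows "homology_class X d j z = boundaries X d j +>\<^bsub>X j\<^esub> z"
proof -
  interpret abelian_group "X j" by (rule abelian_group_X)
  have "z \<oplus>\<^bsub>X j\<^esub> b = b \<oplus>\<^bsub>X j\<^esub> z" if "b \<in> boundaries X d j" for b
    using that z submoduleD(1)[OF submodule_boundaries, of j] by (simp add: a_comm subsetD)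
  then show ?thesis unfolding homology_class_def a_r_coset_def' by (auto, metis)
qed

lemma boundaries_abelian_subgroup: "abelian_subgroup (boundaries X d j) (X j)"
  using submodule.axioms(1)[OF submodule_boundaries]
  by (intro abelian_subgroupI3 additive_subgroup.intro abelian_group_X)

lemma homology_class_add:
  assumes "z \<in> cycles X d j" and "z' \<in> cycles X d j"
  shows "homology_class X d j (z \<oplus>\<^bsub>X j\<^esub> z') = homology_class X d j z \<oplus>\<^bsub>homology X d j\<^esub> homology_class X d j z'"
proof -
  have z: "z \<in> carrier (X j)" "z' \<in> carrier (X j)" using assms cycles_subset by auto
  have "homology_class X d j z \<oplus>\<^bsub>homology X d j\<^esub> homology_class X d j z'
      = (boundaries X d j +>\<^bsub>X j\<^esub> z) <+>\<^bsub>X j\<^esub> (boundaries X d j +>\<^bsub>X j\<^esub> z')"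
    unfolding homology_simps homology_class_eq_coset[OF z(1)] homology_class_eq_coset[OF z(2)] set_add_def'
    by blast
  also have "\<dots> = boundaries X d j +>\<^bsub>X j\<^esub> (z \<oplus>\<^bsub>X j\<^esub> z')"
    using abelian_subgroup.a_rcos_sum[OF boundaries_abelian_subgroup z] .
  finally show ?thesis
    using homology_class_eq_coset abelian_monoid.a_closed[OF abelian_group.axioms(1)[OF abelian_group_X] z]
    by simp
qed

lemma homology_class_eq_zero_iff:
  assumes "z \<in> cycles X d j"
  shows "homology_class X d j z = \<zero>\<^bsub>homology X d j\<^esub> \<longleftrightarrow> z \<in> boundaries X d j"
proof -
  have z: "z \<in> carrier (X j)" using assms cycles_subset by auto
  have sub: "subgroup (boundaries X d j) (add_monoid (X j))"
    using submodule.axioms(1)[OF submodule_boundaries] .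
  show ?thesis
    using abelian_group.a_coset_join1[OF abelian_group_X _ z sub] abelian_group.a_coset_join2[OF abelian_group_X z sub]
    by (auto simp: homology_class_eq_coset[OF z] homology_simps)
qed

lemma homology_class_smult:
  assumes "z \<in> cycles X d j" and r: "r \<in> carrier R"
  shows "homology_class X d j (r \<odot>\<^bsub>X j\<^esub> z) = r \<odot>\<^bsub>homology X d j\<^esub> homology_class X d j z"
proof -
  interpret abelian_group "X j" by (rule abelian_group_X)
  note B = submoduleD[OF submodule_boundaries]
  have z: "z \<in> carrier (X j)" using assms cycles_subset by auto
  have "r \<odot>\<^bsub>X j\<^esub> (z \<oplus>\<^bsub>X j\<^esub> b') \<oplus>\<^bsub>X j\<^esub> b = r \<odot>\<^bsub>X j\<^esub> z \<oplus>\<^bsub>X j\<^esub> (r \<odot>\<^bsub>X j\<^esub> b' \<oplus>\<^bsub>X j\<^esub> b)"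
    if "b \<in> boundaries X d j" "b' \<in> boundaries X d j" for b b'
  proof -
    have bc: "b \<in> carrier (X j)" "b' \<in> carrier (X j)" using that B(1) by auto
    then show ?thesis
      using z r left_module_smult_closed[OF left_module_X r]
      by (simp add: left_module_smult_r_distr[OF left_module_X] a_assoc)
  qed
  moreover have "r \<odot>\<^bsub>X j\<^esub> z \<oplus>\<^bsub>X j\<^esub> b = r \<odot>\<^bsub>X j\<^esub> (z \<oplus>\<^bsub>X j\<^esub> \<zero>\<^bsub>X j\<^esub>) \<oplus>\<^bsub>X j\<^esub> b" for b
    using z by simp
  ultimately show ?thesis
    unfolding homology_simps homology_class_def using B(2,4,5) r by blast
qed

lemma homology_quotient_of_iso:
  assumes N: "left_module R N" and iso: "mod_iso R (homology X d j) N"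
  shows "\<exists>\<pi>. homology_quotient R X d j N \<pi>"
proof -
  interpret N: abelian_group N using left_module_abelian_group[OF N] .
  obtain f where f: "lin_map R (homology X d j) N f"
    and bij: "bij_betw f (carrier (homology X d j)) (carrier N)"
    using iso unfolding mod_iso_def by blast
  let ?cls = "homology_class X d j"
  have cls: "?cls z \<in> carrier (homology X d j)" if "z \<in> cycles X d j" for z
    using that by (simp add: homology_simps)
  have zero_cycle: "\<zero>\<^bsub>X j\<^esub> \<in> cycles X d j" using submoduleD(2)[OF submodule_cycles] .
  have zero_class: "?cls \<zero>\<^bsub>X j\<^esub> = \<zero>\<^bsub>homology X d j\<^esub>"
    using homology_class_eq_zero_iff[OF zero_cycle] submoduleD(2)[OF submodule_boundaries] by simp
  have "?cls \<zero>\<^bsub>X j\<^esub> = ?cls (\<zero>\<^bsub>X j\<^esub> \<oplus>\<^bsub>X j\<^esub> \<zero>\<^bsub>X j\<^esub>)"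
    using abelian_monoid.r_zero[OF abelian_group.axioms(1)[OF abelian_group_X]] cycles_subset zero_cycle
    by (metis subsetD)
  then have "f (?cls \<zero>\<^bsub>X j\<^esub>) \<oplus>\<^bsub>N\<^esub> f (?cls \<zero>\<^bsub>X j\<^esub>) = f (?cls \<zero>\<^bsub>X j\<^esub>)"
    using lin_mapD(2)[OF f cls[OF zero_cycle] cls[OF zero_cycle]] homology_class_add[OF zero_cycle zero_cycle]
    by simp
  then have f0: "f (?cls \<zero>\<^bsub>X j\<^esub>) = \<zero>\<^bsub>N\<^esub>"
    using N.add.l_cancel_one lin_mapD(1)[OF f cls[OF zero_cycle]] by simp
  have "lin_map R (submod (X j) (cycles X d j)) N (\<lambda>z. f (?cls z))"
    using lin_mapD[OF f] cls homology_class_add homology_class_smult submoduleD(4,5)[OF submodule_cycles]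
    by (intro lin_mapI) simp_all
  moreover have "(\<lambda>z. f (?cls z)) ` cycles X d j = carrier N"
    using bij unfolding bij_betw_def by (auto simp: homology_simps)
  moreover have "f (?cls z) = \<zero>\<^bsub>N\<^esub> \<longleftrightarrow> z \<in> boundaries X d j" if z: "z \<in> cycles X d j" for z
  proof -
    have "f (?cls z) = \<zero>\<^bsub>N\<^esub> \<longleftrightarrow> ?cls z = ?cls \<zero>\<^bsub>X j\<^esub>"
      using inj_on_eq_iff[OF bij_betw_imp_inj_on[OF bij] cls[OF z] cls[OF zero_cycle]] f0 by simp
    then show ?thesis using homology_class_eq_zero_iff[OF z] zero_class by simp
  qed
  ultimately show ?thesis unfolding homology_quotient_def by blast
qed

lemma vanishing_cycles_exact:
  "carrier (X j) = {\<zero>\<^bsub>X j\<^esub>} \<Longrightarrow> cycles X d j \<subseteq> boundaries X d j"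
  using cycles_subset[of j] submoduleD(2)[OF submodule_boundaries] by auto

lemma homology_quotient_zero_exact:
  assumes "homology_quotient R X d j N \<pi>" and "is_zero_mod N"
  shows "cycles X d j \<subseteq> boundaries X d j"
proof
  fix z assume z: "z \<in> cycles X d j"
  have "\<pi> z \<in> carrier N"
    using assms(1) z unfolding homology_quotient_def by blast
  then show "z \<in> boundaries X d j"
    using assms z unfolding homology_quotient_def is_zero_mod_def by auto
qed

lemma cycles_retraction:
  assumes s: "lin_map R (X (j - 1)) (X j) s" and ds: "\<And>z. z \<in> cycles X d (j - 1) \<Longrightarrow> d j (s z) = z"
  shows "lin_map R (X j) (submod (X j) (cycles X d j)) (\<lambda>x. x \<ominus>\<^bsub>X j\<^esub> s (d j x))"
    and "\<And>z. z \<in> cycles X d j \<Longrightarrow> z \<ominus>\<^bsub>X j\<^esub> s (d j z) = z"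
proof -
  have u: "lin_map R (X j) (X j) (\<lambda>x. x \<ominus>\<^bsub>X j\<^esub> s (d j x))"
    by (rule lin_map_diff[OF _ lin_map_comp[OF lin_map_d s] left_module_X]) (rule lin_mapI; simp)
  have "x \<ominus>\<^bsub>X j\<^esub> s (d j x) \<in> cycles X d j" if x: "x \<in> carrier (X j)" for x
  proof -
    have dx: "d j x \<in> carrier (X (j - 1))" using lin_mapD(1)[OF lin_map_d x] .
    have "d j (x \<ominus>\<^bsub>X j\<^esub> s (d j x)) = d j x \<ominus>\<^bsub>X (j - 1)\<^esub> d j (s (d j x))"
      using lin_map_minus[OF left_module_X left_module_X lin_map_d x lin_mapD(1)[OF s dx]] .
    also have "\<dots> = \<zero>\<^bsub>X (j - 1)\<^esub>"
      using ds[OF d_in_cycles[OF x]] abelian_group_minus_eq_zero_iff[OF abelian_group_X dx dx] by simp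
    finally show ?thesis using lin_mapD(1)[OF u x] by (simp add: cycles_def)
  qed
  with u show "lin_map R (X j) (submod (X j) (cycles X d j)) (\<lambda>x. x \<ominus>\<^bsub>X j\<^esub> s (d j x))"
    unfolding lin_map_submod_iff[OF cycles_subset] by blast
  fix z assume "z \<in> cycles X d j"
  then show "z \<ominus>\<^bsub>X j\<^esub> s (d j z) = z"
    using lin_map_zero[OF left_module_X left_module_X s] abelian_group_minus_zero[OF abelian_group_X]
    by (simp add: cycles_def)
qed

lemma splitting_step:
  assumes proj: "projective R (X j)" and exact: "cycles X d j \<subseteq> boundaries X d j"
    and s: "lin_map R (X (j - 1)) (X j) s" and ds: "\<And>z. z \<in> cycles X d (j - 1) \<Longrightarrow> d j (s z) = z"
  shows "\<exists>s'. lin_map R (X j) (X (j + 1)) s' \<and> (\<forall>z\<in>cycles X d j. d (j + 1) (s' z) = z)"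
proof -
  let ?u = "\<lambda>x. x \<ominus>\<^bsub>X j\<^esub> s (d j x)"
  note u = lin_map_submodD(1)[OF cycles_retraction(1)[OF s ds] cycles_subset]
    and u_cycles = lin_map_submodD(2)[OF cycles_retraction(1)[OF s ds] cycles_subset]
  have "?u ` carrier (X j) \<subseteq> d (j + 1) ` carrier (X (j + 1))"
    using subsetD[OF exact u_cycles] unfolding boundaries_def by blast
  then obtain s' where "lin_map R (X j) (X (j + 1)) s'" "\<And>x. x \<in> carrier (X j) \<Longrightarrow> d (j + 1) (s' x) = ?u x"
    using projective_lift_carrier[OF proj left_module_X left_module_X lin_map_d_succ u] by blast
  then show ?thesis
    using cycles_retraction(2)[OF s ds] cycles_subset by (metis subsetD)
qed

lemma exact_complex_splits:
  assumes proj: "\<And>i. projective R (X i)" and below: "\<And>i. i < a \<Longrightarrow> carrier (X i) = {\<zero>\<^bsub>X i\<^esub>}"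
    and exact: "\<And>i. i < j0 \<Longrightarrow> cycles X d i \<subseteq> boundaries X d i" and j: "j < j0"
  shows "\<exists>s. lin_map R (X j) (X (j + 1)) s \<and> (\<forall>z\<in>cycles X d j. d (j + 1) (s z) = z)"
proof -
  have trivial_below: "\<exists>s. lin_map R (X i) (X (i + 1)) s \<and> (\<forall>z\<in>cycles X d i. d (i + 1) (s z) = z)"
    if i: "i < a" for i
  proof (intro exI conjI ballI)
    show "lin_map R (X i) (X (i + 1)) (\<lambda>x. \<zero>\<^bsub>X (i + 1)\<^esub>)" by (rule lin_map_const_zero[OF left_module_X])
    fix z assume "z \<in> cycles X d i"
    then show "d (i + 1) \<zero>\<^bsub>X (i + 1)\<^esub> = z"
      using below[OF i] cycles_subset[of i] d_zero[of "i + 1"] by auto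
  qed
  have "i < j0 \<longrightarrow> (\<exists>s. lin_map R (X i) (X (i + 1)) s \<and> (\<forall>z\<in>cycles X d i. d (i + 1) (s z) = z))"
    if "a - 1 \<le> i" for i
    using that
  proof (induction i rule: int_ge_induct)
    case base
    then show ?case using trivial_below[of "a - 1"] by simp
  next
    case (step i)
    show ?case
    proof
      assume i: "i + 1 < j0"
      then obtain s where "lin_map R (X (i + 1 - 1)) (X (i + 1)) s"
        "\<And>z. z \<in> cycles X d (i + 1 - 1) \<Longrightarrow> d (i + 1) (s z) = z"
        using step.IH by auto
      then show "\<exists>s. lin_map R (X (i + 1)) (X (i + 1 + 1)) s \<and> (\<forall>z\<in>cycles X d (i + 1). d (i + 1 + 1) (s z) = z)"
        by (rule splitting_step[OF proj exact[OF i]])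
    qed
  qed
  then show ?thesis using trivial_below j by (cases "j < a") auto
qed

lemma homology_quotient_extends:
  assumes proj: "\<And>i. projective R (X i)" and below: "\<And>i. i < a \<Longrightarrow> carrier (X i) = {\<zero>\<^bsub>X i\<^esub>}"
    and exact: "\<And>i. i < j0 \<Longrightarrow> cycles X d i \<subseteq> boundaries X d i"
    and \<pi>: "homology_quotient R X d j0 N \<pi>"
  shows "\<exists>\<rho>. lin_map R (X j0) N \<rho> \<and> (\<forall>z\<in>cycles X d j0. \<rho> z = \<pi> z)"
proof -
  have "\<exists>s. lin_map R (X (j0 - 1)) (X (j0 - 1 + 1)) s \<and> (\<forall>z\<in>cycles X d (j0 - 1). d (j0 - 1 + 1) (s z) = z)"
    using exact_complex_splits[of a j0 "j0 - 1", OF proj below exact] by simp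
  then obtain s where s: "lin_map R (X (j0 - 1)) (X j0) s"
    and ds: "\<And>z. z \<in> cycles X d (j0 - 1) \<Longrightarrow> d j0 (s z) = z"
    by auto
  have "lin_map R (X j0) N (\<lambda>x. \<pi> (x \<ominus>\<^bsub>X j0\<^esub> s (d j0 x)))"
    using lin_map_comp[OF cycles_retraction(1)[OF s ds]] \<pi> unfolding homology_quotient_def by blast
  then show ?thesis using cycles_retraction(2)[OF s ds] by auto
qed

end

lemma proj_resolutionD:
  assumes "proj_resolution R M Q e \<epsilon>"
  shows "projective R (Q k)" and "lin_map R (Q (Suc k)) (Q k) (e (Suc k))"
    and "lin_map R (Q 0) M \<epsilon>" and "\<epsilon> ` carrier (Q 0) = carrier M"
    and "{x \<in> carrier (Q 0). \<epsilon> x = \<zero>\<^bsub>M\<^esub>} = e 1 ` carrier (Q 1)"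
    and "\<And>x. x \<in> carrier (Q (Suc (Suc k))) \<Longrightarrow> e (Suc k) (e (Suc (Suc k)) x) = \<zero>\<^bsub>Q k\<^esub>"
proof -
  note res = assms[unfolded proj_resolution_def]
  show "projective R (Q k)" using res[THEN conjunct1] by blast
  show "lin_map R (Q (Suc k)) (Q k) (e (Suc k))"
    using res[THEN conjunct2, THEN conjunct1, rule_format, of "Suc k"] by simp
  show "lin_map R (Q 0) M \<epsilon>" by (rule res[THEN conjunct2, THEN conjunct2, THEN conjunct1])
  show "\<epsilon> ` carrier (Q 0) = carrier M" by (rule res[THEN conjunct2, THEN conjunct2, THEN conjunct2, THEN conjunct1])
  show "{x \<in> carrier (Q 0). \<epsilon> x = \<zero>\<^bsub>M\<^esub>} = e 1 ` carrier (Q 1)"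
    by (rule res[THEN conjunct2, THEN conjunct2, THEN conjunct2, THEN conjunct2, THEN conjunct1])
  have "{x \<in> carrier (Q (Suc k)). e (Suc k) x = \<zero>\<^bsub>Q k\<^esub>} = e (Suc (Suc k)) ` carrier (Q (Suc (Suc k)))"
    using res[THEN conjunct2, THEN conjunct2, THEN conjunct2, THEN conjunct2, THEN conjunct2, rule_format, of "Suc k"]
    by simp
  then show "\<And>x. x \<in> carrier (Q (Suc (Suc k))) \<Longrightarrow> e (Suc k) (e (Suc (Suc k)) x) = \<zero>\<^bsub>Q k\<^esub>"
    by blast
qed

lemma lin_map_eq_on_fibres:
  assumes P: "left_module R P" and M: "left_module R M" and A: "left_module R A"
    and \<epsilon>: "lin_map R P M \<epsilon>" and g: "lin_map R P A g"
    and g_ker: "\<And>x. x \<in> carrier P \<Longrightarrow> \<epsilon> x = \<zero>\<^bsub>M\<^esub> \<Longrightarrow> g x = \<zero>\<^bsub>A\<^esub>"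
    and q: "q \<in> carrier P" "q' \<in> carrier P" and eq: "\<epsilon> q = \<epsilon> q'"
  shows "g q = g q'"
proof -
  have "\<epsilon> (q \<ominus>\<^bsub>P\<^esub> q') = \<zero>\<^bsub>M\<^esub>"
    using lin_map_minus[OF P M \<epsilon> q] abelian_group_minus_eq_zero_iff[OF left_module_abelian_group[OF M]
        lin_mapD(1)[OF \<epsilon> q(1)] lin_mapD(1)[OF \<epsilon> q(2)]] eq by simp
  then have "g q \<ominus>\<^bsub>A\<^esub> g q' = \<zero>\<^bsub>A\<^esub>"
    using g_ker abelian_group.minus_closed[OF left_module_abelian_group[OF P] q] lin_map_minus[OF P A g q] by simp
  then show ?thesis
    using abelian_group_minus_eq_zero_iff[OF left_module_abelian_group[OF A] lin_mapD(1)[OF g q(1)]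
        lin_mapD(1)[OF g q(2)]] by simp
qed

lemma lin_map_factor:
  assumes P: "left_module R P" and M: "left_module R M" and A: "left_module R A"
    and \<epsilon>: "lin_map R P M \<epsilon>" and surj: "\<epsilon> ` carrier P = carrier M"
    and g: "lin_map R P A g" and g_ker: "\<And>x. x \<in> carrier P \<Longrightarrow> \<epsilon> x = \<zero>\<^bsub>M\<^esub> \<Longrightarrow> g x = \<zero>\<^bsub>A\<^esub>"
  shows "\<exists>\<sigma>. lin_map R M A \<sigma> \<and> (\<forall>x\<in>carrier P. \<sigma> (\<epsilon> x) = g x)"
proof -
  have preimage: "\<exists>q\<in>carrier P. m = \<epsilon> q" if "m \<in> carrier M" for m
  proof -
    have "m \<in> \<epsilon> ` carrier P" using that by (simp add: surj)
    then show ?thesis by blast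
  qed
  define \<sigma> where "\<sigma> m = g (SOME q. q \<in> carrier P \<and> \<epsilon> q = m)" for m
  have \<sigma>: "\<sigma> (\<epsilon> q) = g q" if q: "q \<in> carrier P" for q
  proof -
    let ?q' = "SOME q'. q' \<in> carrier P \<and> \<epsilon> q' = \<epsilon> q"
    have "?q' \<in> carrier P \<and> \<epsilon> ?q' = \<epsilon> q" by (rule someI[of _ q]) (simp add: q)
    then show ?thesis unfolding \<sigma>_def using lin_map_eq_on_fibres[OF P M A \<epsilon> g g_ker _ q] by simp
  qed
  have "lin_map R M A \<sigma>"
  proof (rule lin_mapI)
    fix m assume "m \<in> carrier M"
    then obtain q where "q \<in> carrier P" "m = \<epsilon> q" using preimage by blast
    then show "\<sigma> m \<in> carrier A" using \<sigma> lin_mapD(1)[OF g] by simp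
  next
    fix m m' assume "m \<in> carrier M" "m' \<in> carrier M"
    then obtain q q' where q: "q \<in> carrier P" "q' \<in> carrier P" and m: "m = \<epsilon> q" "m' = \<epsilon> q'"
      using preimage by blast
    have "\<sigma> (\<epsilon> q \<oplus>\<^bsub>M\<^esub> \<epsilon> q') = \<sigma> (\<epsilon> (q \<oplus>\<^bsub>P\<^esub> q'))" using lin_mapD(2)[OF \<epsilon> q] by simp
    also have "\<dots> = g q \<oplus>\<^bsub>A\<^esub> g q'"
      using \<sigma> lin_mapD(2)[OF g q] abelian_monoid.a_closed[OF abelian_group.axioms(1)[OF left_module_abelian_group[OF P]] q]
      by simp
    finally show "\<sigma> (m \<oplus>\<^bsub>M\<^esub> m') = \<sigma> m \<oplus>\<^bsub>A\<^esub> \<sigma> m'" using \<sigma> q m by simp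
  next
    fix r m assume r: "r \<in> carrier R" and "m \<in> carrier M"
    then obtain q where q: "q \<in> carrier P" and m: "m = \<epsilon> q" using preimage by blast
    have "\<sigma> (r \<odot>\<^bsub>M\<^esub> \<epsilon> q) = \<sigma> (\<epsilon> (r \<odot>\<^bsub>P\<^esub> q))" using lin_mapD(3)[OF \<epsilon> r q] by simp
    also have "\<dots> = g (r \<odot>\<^bsub>P\<^esub> q)" by (rule \<sigma>[OF left_module_smult_closed[OF P r q]])
    finally show "\<sigma> (r \<odot>\<^bsub>M\<^esub> m) = r \<odot>\<^bsub>A\<^esub> \<sigma> m" using \<sigma> q m lin_mapD(3)[OF g r q] by simp
  qed
  then show ?thesis using \<sigma> by blast
qed

lemma proj_resolution_factor:
  assumes res: "proj_resolution R M Q e \<epsilon>" and M: "left_module R M" and A: "left_module R A"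
    and g: "lin_map R (Q 0) A g" and g_e: "\<And>x. x \<in> carrier (Q 1) \<Longrightarrow> g (e 1 x) = \<zero>\<^bsub>A\<^esub>"
  shows "\<exists>\<sigma>. lin_map R M A \<sigma> \<and> (\<forall>x\<in>carrier (Q 0). \<sigma> (\<epsilon> x) = g x)"
proof (rule lin_map_factor[OF projective_left_module[OF proj_resolutionD(1)[OF res]] M A
      proj_resolutionD(3,4)[OF res] g])
  fix x assume "x \<in> carrier (Q 0)" "\<epsilon> x = \<zero>\<^bsub>M\<^esub>"
  then have "x \<in> {x \<in> carrier (Q 0). \<epsilon> x = \<zero>\<^bsub>M\<^esub>}" by simp
  then have "x \<in> e 1 ` carrier (Q 1)" unfolding proj_resolutionD(5)[OF res] .
  then show "g x = \<zero>\<^bsub>A\<^esub>" using g_e by blast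
qed

section \<open>Lifting maps into homology along a projective resolution\<close>

locale homology_lifting = chain_complex R X d
  for R :: "'r ring" and X :: "int \<Rightarrow> ('r, 'b) module" and d +
  fixes M :: "('r, 'm) module" and Q :: "nat \<Rightarrow> ('r, 'q) module" and e :: "nat \<Rightarrow> 'q \<Rightarrow> 'q"
    and \<epsilon> :: "'q \<Rightarrow> 'm" and N :: "int \<Rightarrow> ('r, 'n) module" and \<pi> :: "int \<Rightarrow> 'b \<Rightarrow> 'n"
    and j0 t :: int and \<phi> :: "'m \<Rightarrow> 'n"
  assumes left_module_M: "left_module R M"
    and resolution: "proj_resolution R M Q e \<epsilon>"
    and ext_X: "\<And>i. ext_vanish_pos R Q e (X i)"
    and left_module_N: "\<And>j. j0 \<le> j \<Longrightarrow> left_module R (N j)"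
    and ext_N: "\<And>j. j0 \<le> j \<Longrightarrow> ext_vanish_pos R Q e (N j)"
    and quotient: "\<And>j. j0 \<le> j \<Longrightarrow> homology_quotient R X d j (N j) (\<pi> j)"
    and above: "\<And>i. t < i \<Longrightarrow> carrier (X i) = {\<zero>\<^bsub>X i\<^esub>}"
    and lin_map_\<phi>: "lin_map R M (N j0) \<phi>"
begin

text \<open>Everything is reindexed from degree \<open>j0\<close> on, so that degree \<open>k\<close> of the complex faces \<open>Q k\<close>.\<close>
definition Y :: "nat \<Rightarrow> ('r, 'b) module" where "Y k = X (j0 + int k)"
definition D :: "nat \<Rightarrow> 'b \<Rightarrow> 'b" where "D k = d (j0 + int k)"
definition H :: "nat \<Rightarrow> ('r, 'n) module" where "H k = N (j0 + int k)"
definition cls :: "nat \<Rightarrow> 'b \<Rightarrow> 'n" where "cls k = \<pi> (j0 + int k)"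
definition Z :: "nat \<Rightarrow> 'b set" where "Z k = cycles X d (j0 + int k)"
definition B :: "nat \<Rightarrow> 'b set" where "B k = boundaries X d (j0 + int k)"

lemma left_module_Y: "left_module R (Y k)"
  unfolding Y_def by (rule left_module_X)

lemma abelian_group_Y: "abelian_group (Y k)"
  using left_module_abelian_group[OF left_module_Y] .

lemma left_module_H: "left_module R (H k)"
  unfolding H_def by (rule left_module_N) simp

lemma index_Suc: "j0 + int (Suc k) = j0 + int k + 1"
  by simp

lemma lin_map_D: "lin_map R (Y (Suc k)) (Y k) (D (Suc k))"
  unfolding Y_def D_def index_Suc by (rule lin_map_d_succ)

lemma boundaries_Y: "B k = D (Suc k) ` carrier (Y (Suc k))"
  unfolding B_def Y_def D_def index_Suc by (rule boundaries_def)

lemma cycles_Y: "Z (Suc k) = {x \<in> carrier (Y (Suc k)). D (Suc k) x = \<zero>\<^bsub>Y k\<^esub>}"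
  unfolding Z_def Y_def D_def index_Suc cycles_def by simp

lemma submodule_Z: "submodule (Z k) R (Y k)"
  unfolding Y_def Z_def by (rule submodule_cycles)

lemma B_subset_Z: "B k \<subseteq> Z k"
  unfolding B_def Z_def by (rule boundaries_subset_cycles)

lemma D_D: "x \<in> carrier (Y (Suc (Suc k))) \<Longrightarrow> D (Suc k) (D (Suc (Suc k)) x) = \<zero>\<^bsub>Y k\<^esub>"
  using B_subset_Z boundaries_Y cycles_Y by blast

lemma lin_map_cls: "lin_map R (submod (Y k) (Z k)) (H k) (cls k)"
  and cls_surj: "cls k ` Z k = carrier (H k)"
  and cls_eq_zero_iff: "z \<in> Z k \<Longrightarrow> cls k z = \<zero>\<^bsub>H k\<^esub> \<longleftrightarrow> z \<in> B k"
  using quotient[of "j0 + int k"] by (simp_all add: homology_quotient_def Y_def H_def cls_def Z_def B_def)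

lemma cls_zero: "cls k \<zero>\<^bsub>Y k\<^esub> = \<zero>\<^bsub>H k\<^esub>"
  using lin_map_zero[OF left_module_submod[OF left_module_Y submodule_Z] left_module_H lin_map_cls] by simp

lemma Z_minus_closed: "z \<in> Z k \<Longrightarrow> z' \<in> Z k \<Longrightarrow> z \<ominus>\<^bsub>Y k\<^esub> z' \<in> Z k"
  using submoduleD(3,4)[OF submodule_Z] unfolding a_minus_def by blast

lemma cls_minus: "z \<in> Z k \<Longrightarrow> z' \<in> Z k \<Longrightarrow> cls k (z \<ominus>\<^bsub>Y k\<^esub> z') = cls k z \<ominus>\<^bsub>H k\<^esub> cls k z'"
  using abelian_group_hom.hom_minus[OF lin_map_abelian_group_hom[OF left_module_submod[OF left_module_Y submodule_Z]
        left_module_H lin_map_cls]] submod_minus[OF left_module_Y submodule_Z]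
  by simp

lemma ext_Y: "ext_vanish_pos R Q e (Y k)"
  unfolding Y_def by (rule ext_X)

lemma ext_H: "ext_vanish_pos R Q e (H k)"
  unfolding H_def by (rule ext_N) simp

lemma left_module_Q: "left_module R (Q k)"
  using projective_left_module[OF proj_resolutionD(1)[OF resolution]] .

lemmas lin_map_e = proj_resolutionD(2)[OF resolution]
  and e_e = proj_resolutionD(6)[OF resolution]

lemma e_lift_through_cls:
  assumes f: "lin_map R (Q k) (H m) f"
  shows "\<exists>h. lin_map R (Q k) (Y m) h \<and> (\<forall>x\<in>carrier (Q k). h x \<in> Z m \<and> cls m (h x) = f x)"
  using projective_lift[OF proj_resolutionD(1)[OF resolution] left_module_Y left_module_H submodule_Z
      lin_map_cls f] cls_surj lin_mapD(1)[OF f] by blast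

text \<open>The last clause is what lets the construction continue.\<close>
definition chain_map_upto :: "nat \<Rightarrow> (nat \<Rightarrow> 'q \<Rightarrow> 'b) \<Rightarrow> bool" where
  "chain_map_upto K f \<longleftrightarrow> (\<forall>k\<le>K. lin_map R (Q k) (Y k) (f k))
     \<and> (\<forall>x\<in>carrier (Q 0). f 0 x \<in> Z 0 \<and> cls 0 (f 0 x) = \<phi> (\<epsilon> x))
     \<and> (\<forall>k<K. \<forall>x\<in>carrier (Q (Suc k)). D (Suc k) (f (Suc k) x) = f k (e (Suc k) x))
     \<and> (\<forall>x\<in>carrier (Q (Suc K)). f K (e (Suc K) x) \<in> B K)"

lemma chain_map_upto_0: "\<exists>f. chain_map_upto 0 f"
proof -
  have \<phi>: "lin_map R M (H 0) \<phi>" using lin_map_\<phi> by (simp add: H_def)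
  obtain h where h: "lin_map R (Q 0) (Y 0) h"
    and h_cls: "\<And>x. x \<in> carrier (Q 0) \<Longrightarrow> h x \<in> Z 0 \<and> cls 0 (h x) = \<phi> (\<epsilon> x)"
    using e_lift_through_cls[OF lin_map_comp[OF proj_resolutionD(3)[OF resolution] \<phi>]] by blast
  have "h (e 1 x) \<in> B 0" if x: "x \<in> carrier (Q 1)" for x
  proof -
    have "e 1 x \<in> {y \<in> carrier (Q 0). \<epsilon> y = \<zero>\<^bsub>M\<^esub>}"
      unfolding proj_resolutionD(5)[OF resolution] using x by blast
    then have ex: "e 1 x \<in> carrier (Q 0)" and "cls 0 (h (e 1 x)) = \<zero>\<^bsub>H 0\<^esub>"
      using h_cls lin_map_zero[OF left_module_M left_module_H \<phi>] by auto
    then show ?thesis using cls_eq_zero_iff h_cls[OF ex] by blast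
  qed
  then have "chain_map_upto 0 (\<lambda>k. h)" unfolding chain_map_upto_def using h h_cls by auto
  then show ?thesis by blast
qed

text \<open>This is where \<open>Ext\<^sup>k(M, H\<^sub>j(X)) = 0\<close> is used.\<close>
lemma correct_into_boundaries:
  assumes h: "lin_map R (Q (Suc k)) (Y (Suc k)) h"
    and h_Z: "\<And>x. x \<in> carrier (Q (Suc (Suc k))) \<Longrightarrow> h (e (Suc (Suc k)) x) \<in> Z (Suc k)"
  shows "\<exists>h'. lin_map R (Q (Suc k)) (Y (Suc k)) h' \<and> (\<forall>x\<in>carrier (Q (Suc k)). h' x \<in> Z (Suc k))
    \<and> (\<forall>x\<in>carrier (Q (Suc (Suc k))). h (e (Suc (Suc k)) x) \<ominus>\<^bsub>Y (Suc k)\<^esub> h' (e (Suc (Suc k)) x) \<in> B (Suc k))"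
proof -
  define \<theta> where "\<theta> x = cls (Suc k) (h (e (Suc (Suc k)) x))" for x
  have "lin_map R (Q (Suc (Suc k))) (submod (Y (Suc k)) (Z (Suc k))) (\<lambda>x. h (e (Suc (Suc k)) x))"
    using lin_map_comp[OF lin_map_e h] h_Z lin_map_submod_iff[OF submoduleD(1)[OF submodule_Z]] by blast
  then have \<theta>: "lin_map R (Q (Suc (Suc k))) (H (Suc k)) \<theta>"
    unfolding \<theta>_def by (rule lin_map_comp[OF _ lin_map_cls])
  have "\<theta> (e (Suc (Suc (Suc k))) x) = \<zero>\<^bsub>H (Suc k)\<^esub>" if "x \<in> carrier (Q (Suc (Suc (Suc k))))" for x
    using e_e[OF that] lin_map_zero[OF left_module_Q left_module_Y h] cls_zero by (simp add: \<theta>_def)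
  then obtain \<psi> where \<psi>: "lin_map R (Q (Suc k)) (H (Suc k)) \<psi>"
    and \<theta>_\<psi>: "\<And>x. x \<in> carrier (Q (Suc (Suc k))) \<Longrightarrow> \<theta> x = \<psi> (e (Suc (Suc k)) x)"
    using ext_vanish_posD[OF ext_H \<theta>] by blast
  obtain h' where h': "lin_map R (Q (Suc k)) (Y (Suc k)) h'"
    and h'_cls: "\<And>x. x \<in> carrier (Q (Suc k)) \<Longrightarrow> h' x \<in> Z (Suc k) \<and> cls (Suc k) (h' x) = \<psi> x"
    using e_lift_through_cls[OF \<psi>] by blast
  have "h (e (Suc (Suc k)) x) \<ominus>\<^bsub>Y (Suc k)\<^esub> h' (e (Suc (Suc k)) x) \<in> B (Suc k)"
    if x: "x \<in> carrier (Q (Suc (Suc k)))" for x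
  proof -
    let ?y = "e (Suc (Suc k)) x"
    have y: "?y \<in> carrier (Q (Suc k))" using lin_mapD(1)[OF lin_map_e x] .
    have h'_Z: "h' ?y \<in> Z (Suc k)" using h'_cls[OF y] by blast
    have diff_Z: "h ?y \<ominus>\<^bsub>Y (Suc k)\<^esub> h' ?y \<in> Z (Suc k)" by (rule Z_minus_closed[OF h_Z[OF x] h'_Z])
    have "cls (Suc k) (h ?y \<ominus>\<^bsub>Y (Suc k)\<^esub> h' ?y) = \<theta> x \<ominus>\<^bsub>H (Suc k)\<^esub> \<psi> ?y"
      using cls_minus[OF h_Z[OF x] h'_Z] h'_cls[OF y] by (simp add: \<theta>_def)
    also have "\<dots> = \<zero>\<^bsub>H (Suc k)\<^esub>"
      using \<theta>_\<psi>[OF x] abelian_group_minus_eq_zero_iff[OF left_module_abelian_group[OF left_module_H]]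
        lin_mapD(1)[OF \<psi> y] by simp
    finally show ?thesis using cls_eq_zero_iff[OF diff_Z] by simp
  qed
  then show ?thesis using h' h'_cls by blast
qed

lemma lift_along_D:
  assumes \<theta>: "lin_map R (Q m) (Y k) \<theta>" and \<theta>_B: "\<And>x. x \<in> carrier (Q m) \<Longrightarrow> \<theta> x \<in> B k"
  shows "\<exists>h. lin_map R (Q m) (Y (Suc k)) h \<and> (\<forall>x\<in>carrier (Q m). D (Suc k) (h x) = \<theta> x)"
proof -
  have "\<theta> ` carrier (Q m) \<subseteq> D (Suc k) ` carrier (Y (Suc k))"
    using \<theta>_B unfolding boundaries_Y by blast
  then show ?thesis
    by (rule projective_lift_carrier[OF proj_resolutionD(1)[OF resolution] left_module_Y left_module_Y lin_map_D \<theta>])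
qed

lemma D_minus_cycle:
  assumes "x \<in> carrier (Y (Suc k))" and "z \<in> Z (Suc k)"
  shows "D (Suc k) (x \<ominus>\<^bsub>Y (Suc k)\<^esub> z) = D (Suc k) x"
proof -
  have z: "z \<in> carrier (Y (Suc k))" "D (Suc k) z = \<zero>\<^bsub>Y k\<^esub>" using assms(2) unfolding cycles_Y by auto
  then show ?thesis
    using lin_map_minus[OF left_module_Y left_module_Y lin_map_D assms(1) z(1)]
      abelian_group_minus_zero[OF abelian_group_Y lin_mapD(1)[OF lin_map_D assms(1)]] by simp
qed

lemma chain_map_upto_Suc:
  assumes f: "chain_map_upto K f"
  shows "\<exists>f'. chain_map_upto (Suc K) f'"
proof -
  have f_lin: "\<And>k. k \<le> K \<Longrightarrow> lin_map R (Q k) (Y k) (f k)"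
    and f_0: "\<And>x. x \<in> carrier (Q 0) \<Longrightarrow> f 0 x \<in> Z 0 \<and> cls 0 (f 0 x) = \<phi> (\<epsilon> x)"
    and f_D: "\<And>k x. k < K \<Longrightarrow> x \<in> carrier (Q (Suc k)) \<Longrightarrow> D (Suc k) (f (Suc k) x) = f k (e (Suc k) x)"
    and f_B: "\<And>x. x \<in> carrier (Q (Suc K)) \<Longrightarrow> f K (e (Suc K) x) \<in> B K"
    using f unfolding chain_map_upto_def by auto
  obtain h where h: "lin_map R (Q (Suc K)) (Y (Suc K)) h"
    and h_D: "\<And>x. x \<in> carrier (Q (Suc K)) \<Longrightarrow> D (Suc K) (h x) = f K (e (Suc K) x)"
    using lift_along_D[OF lin_map_comp[OF lin_map_e f_lin[OF order_refl]] f_B] by blast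
  have h_Z: "h (e (Suc (Suc K)) x) \<in> Z (Suc K)" if x: "x \<in> carrier (Q (Suc (Suc K)))" for x
  proof -
    have ex: "e (Suc (Suc K)) x \<in> carrier (Q (Suc K))" using lin_mapD(1)[OF lin_map_e x] .
    have "D (Suc K) (h (e (Suc (Suc K)) x)) = \<zero>\<^bsub>Y K\<^esub>"
      using h_D[OF ex] e_e[OF x] lin_map_zero[OF left_module_Q left_module_Y f_lin] by simp
    then show ?thesis unfolding cycles_Y using lin_mapD(1)[OF h ex] by simp
  qed
  obtain h' where h': "lin_map R (Q (Suc K)) (Y (Suc K)) h'" and h'_Z: "\<And>x. x \<in> carrier (Q (Suc K)) \<Longrightarrow> h' x \<in> Z (Suc K)"
    and h'_B: "\<And>x. x \<in> carrier (Q (Suc (Suc K))) \<Longrightarrow>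
      h (e (Suc (Suc K)) x) \<ominus>\<^bsub>Y (Suc K)\<^esub> h' (e (Suc (Suc K)) x) \<in> B (Suc K)"
    using correct_into_boundaries[OF h h_Z] by blast
  define g where "g x = h x \<ominus>\<^bsub>Y (Suc K)\<^esub> h' x" for x
  have g: "lin_map R (Q (Suc K)) (Y (Suc K)) g"
    unfolding g_def by (rule lin_map_diff[OF h h' left_module_Y])
  have g_D: "D (Suc K) (g x) = f K (e (Suc K) x)" if "x \<in> carrier (Q (Suc K))" for x
    unfolding g_def using D_minus_cycle[OF lin_mapD(1)[OF h that] h'_Z[OF that]] h_D[OF that] by simp
  have "chain_map_upto (Suc K) (f(Suc K := g))"
    unfolding chain_map_upto_def
  proof (intro conjI allI impI ballI)
    fix k assume "k \<le> Suc K"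
    then show "lin_map R (Q k) (Y k) ((f(Suc K := g)) k)" using f_lin g by (cases "k = Suc K") auto
  next
    fix k x assume "k < Suc K" "x \<in> carrier (Q (Suc k))"
    then show "D (Suc k) ((f(Suc K := g)) (Suc k) x) = (f(Suc K := g)) k (e (Suc k) x)"
      using f_D g_D by (cases "k = K") auto
  qed (use f_0 h'_B in \<open>auto simp: g_def\<close>)
  then show ?thesis by blast
qed

lemma chain_map_upto_exists: "\<exists>f. chain_map_upto K f"
proof (induction K)
  case 0
  show ?case by (rule chain_map_upto_0)
next
  case (Suc K)
  then show ?case using chain_map_upto_Suc by blast
qed

definition boundary_correction :: "(nat \<Rightarrow> 'q \<Rightarrow> 'b) \<Rightarrow> nat \<Rightarrow> ('q \<Rightarrow> 'b) \<Rightarrow> bool" where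
  "boundary_correction f m g \<longleftrightarrow> lin_map R (Q m) (Y m) g
     \<and> (\<forall>x\<in>carrier (Q (Suc m)). g (e (Suc m) x) = \<zero>\<^bsub>Y m\<^esub>)
     \<and> (\<exists>h. lin_map R (Q m) (Y (Suc m)) h \<and> (\<forall>x\<in>carrier (Q m). g x = f m x \<ominus>\<^bsub>Y m\<^esub> D (Suc m) (h x)))"

lemma boundary_correction_top:
  assumes f: "chain_map_upto T f" and top: "carrier (Y T) = {\<zero>\<^bsub>Y T\<^esub>}"
  shows "boundary_correction f T (f T)"
proof -
  have f_T: "lin_map R (Q T) (Y T) (f T)" using f unfolding chain_map_upto_def by simp
  have "f T x = f T x \<ominus>\<^bsub>Y T\<^esub> D (Suc T) \<zero>\<^bsub>Y (Suc T)\<^esub>" if "x \<in> carrier (Q T)" for x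
    using lin_map_zero[OF left_module_Y left_module_Y lin_map_D]
      abelian_group_minus_zero[OF abelian_group_Y lin_mapD(1)[OF f_T that]] by simp
  moreover have "f T (e (Suc T) x) = \<zero>\<^bsub>Y T\<^esub>" if "x \<in> carrier (Q (Suc T))" for x
    using lin_mapD(1)[OF f_T lin_mapD(1)[OF lin_map_e that]] top by simp
  ultimately show ?thesis
    unfolding boundary_correction_def using f_T lin_map_const_zero[OF left_module_Y] by blast
qed

text \<open>This is where \<open>Ext\<^sup>k(M, X\<^sub>i) = 0\<close> is used.\<close>
lemma boundary_correction_step:
  assumes f: "chain_map_upto T f" and m: "m < T" and g': "boundary_correction f (Suc m) g'"
  shows "\<exists>g. boundary_correction f m g"
proof -
  have f_lin: "\<And>k. k \<le> T \<Longrightarrow> lin_map R (Q k) (Y k) (f k)"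
    and f_D: "\<And>x. x \<in> carrier (Q (Suc m)) \<Longrightarrow> D (Suc m) (f (Suc m) x) = f m (e (Suc m) x)"
    using f m unfolding chain_map_upto_def by auto
  obtain h where g'_lin: "lin_map R (Q (Suc m)) (Y (Suc m)) g'"
    and g'_e: "\<And>x. x \<in> carrier (Q (Suc (Suc m))) \<Longrightarrow> g' (e (Suc (Suc m)) x) = \<zero>\<^bsub>Y (Suc m)\<^esub>"
    and h: "lin_map R (Q (Suc m)) (Y (Suc (Suc m))) h"
    and g'_h: "\<And>x. x \<in> carrier (Q (Suc m)) \<Longrightarrow> g' x = f (Suc m) x \<ominus>\<^bsub>Y (Suc m)\<^esub> D (Suc (Suc m)) (h x)"
    using g' unfolding boundary_correction_def by blast
  have D_g': "D (Suc m) (g' x) = f m (e (Suc m) x)" if x: "x \<in> carrier (Q (Suc m))" for x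
  proof -
    have "D (Suc m) (g' x) = D (Suc m) (f (Suc m) x) \<ominus>\<^bsub>Y m\<^esub> D (Suc m) (D (Suc (Suc m)) (h x))"
      unfolding g'_h[OF x] using m
      by (intro lin_map_minus[OF left_module_Y left_module_Y lin_map_D] lin_mapD(1)[OF f_lin x]
          lin_mapD(1)[OF lin_map_D lin_mapD(1)[OF h x]]) simp
    then show ?thesis
      using f_D[OF x] D_D[OF lin_mapD(1)[OF h x]] m
        abelian_group_minus_zero[OF abelian_group_Y lin_mapD(1)[OF f_lin lin_mapD(1)[OF lin_map_e x]]] by simp
  qed
  obtain \<psi> where \<psi>: "lin_map R (Q m) (Y (Suc m)) \<psi>"
    and g'_\<psi>: "\<And>x. x \<in> carrier (Q (Suc m)) \<Longrightarrow> g' x = \<psi> (e (Suc m) x)"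
    using ext_vanish_posD[OF ext_Y g'_lin g'_e] by blast
  define g where "g x = f m x \<ominus>\<^bsub>Y m\<^esub> D (Suc m) (\<psi> x)" for x
  have "lin_map R (Q m) (Y m) g"
    unfolding g_def using m by (intro lin_map_diff[OF f_lin lin_map_comp[OF \<psi> lin_map_D] left_module_Y]) simp
  moreover have "g (e (Suc m) x) = \<zero>\<^bsub>Y m\<^esub>" if x: "x \<in> carrier (Q (Suc m))" for x
    using D_g'[OF x] g'_\<psi>[OF x] m abelian_group_minus_eq_zero_iff[OF abelian_group_Y]
      lin_mapD(1)[OF f_lin lin_mapD(1)[OF lin_map_e x]] by (simp add: g_def)
  ultimately have "boundary_correction f m g"
    unfolding boundary_correction_def using \<psi> g_def by blast
  then show ?thesis by blast
qed

lemma boundary_correction_bottom: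
  assumes f: "chain_map_upto T f" and top: "carrier (Y T) = {\<zero>\<^bsub>Y T\<^esub>}"
  shows "\<exists>g. boundary_correction f 0 g"
proof -
  have "i \<le> T \<Longrightarrow> \<exists>g. boundary_correction f (T - i) g" for i
  proof (induction i)
    case 0
    then show ?case using boundary_correction_top[OF f top] by auto
  next
    case (Suc i)
    have eq: "T - i = Suc (T - Suc i)" using Suc.prems by simp
    obtain g' where "boundary_correction f (T - i) g'" using Suc by auto
    then show ?case using boundary_correction_step[OF f, of "T - Suc i"] Suc.prems unfolding eq by simp
  qed
  from this[of T] show ?thesis by simp
qed

lemma boundary_correction_lifts:
  assumes f: "chain_map_upto T f" and g: "boundary_correction f 0 g" and x: "x \<in> carrier (Q 0)"
  shows "g x \<in> Z 0" and "cls 0 (g x) = \<phi> (\<epsilon> x)"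
proof -
  have f_0: "f 0 x \<in> Z 0" "cls 0 (f 0 x) = \<phi> (\<epsilon> x)" using f x unfolding chain_map_upto_def by auto
  obtain h where h: "lin_map R (Q 0) (Y (Suc 0)) h" and g_h: "g x = f 0 x \<ominus>\<^bsub>Y 0\<^esub> D (Suc 0) (h x)"
    using g x unfolding boundary_correction_def by blast
  have b: "D (Suc 0) (h x) \<in> B 0" unfolding boundaries_Y using lin_mapD(1)[OF h x] by blast
  then have b_Z: "D (Suc 0) (h x) \<in> Z 0" using B_subset_Z by blast
  show "g x \<in> Z 0" unfolding g_h by (rule Z_minus_closed[OF f_0(1) b_Z])
  have "cls 0 (g x) = cls 0 (f 0 x) \<ominus>\<^bsub>H 0\<^esub> cls 0 (D (Suc 0) (h x))"
    unfolding g_h by (rule cls_minus[OF f_0(1) b_Z])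
  moreover have "\<phi> (\<epsilon> x) \<in> carrier (H 0)" using lin_mapD(1)[OF lin_map_cls, of "f 0 x" 0] f_0 by simp
  ultimately show "cls 0 (g x) = \<phi> (\<epsilon> x)"
    using f_0(2) cls_eq_zero_iff[OF b_Z] b abelian_group_minus_zero[OF left_module_abelian_group[OF left_module_H]]
    by simp
qed

theorem lift_to_cycles:
  "\<exists>\<sigma>. lin_map R M (X j0) \<sigma> \<and> (\<forall>m\<in>carrier M. \<sigma> m \<in> cycles X d j0 \<and> \<pi> j0 (\<sigma> m) = \<phi> m)"
proof -
  define T where "T = Suc (nat (t - j0))"
  have "t < j0 + int T" by (simp add: T_def)
  then have top: "carrier (Y T) = {\<zero>\<^bsub>Y T\<^esub>}" unfolding Y_def by (rule above)
  obtain f where f: "chain_map_upto T f" using chain_map_upto_exists by blast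
  obtain g where g: "boundary_correction f 0 g" using boundary_correction_bottom[OF f top] by blast
  have g_lin: "lin_map R (Q 0) (Y 0) g"
    and g_e: "\<And>x. x \<in> carrier (Q (Suc 0)) \<Longrightarrow> g (e (Suc 0) x) = \<zero>\<^bsub>Y 0\<^esub>"
    using g unfolding boundary_correction_def by blast+
  obtain \<sigma> where \<sigma>: "lin_map R M (Y 0) \<sigma>" and \<sigma>_\<epsilon>: "\<And>x. x \<in> carrier (Q 0) \<Longrightarrow> \<sigma> (\<epsilon> x) = g x"
    using proj_resolution_factor[OF resolution left_module_M left_module_Y g_lin g_e[folded One_nat_def]] by blast
  have "\<sigma> m \<in> cycles X d j0 \<and> \<pi> j0 (\<sigma> m) = \<phi> m" if "m \<in> carrier M" for m
  proof -
    have "m \<in> \<epsilon> ` carrier (Q 0)" using that by (simp add: proj_resolutionD(4)[OF resolution])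
    then obtain x where x: "x \<in> carrier (Q 0)" "m = \<epsilon> x" by blast
    show ?thesis
      using boundary_correction_lifts[OF f g x(1)] \<sigma>_\<epsilon>[OF x(1)] x(2) by (simp add: Z_def cls_def)
  qed
  moreover have "lin_map R M (X j0) \<sigma>" using \<sigma> by (simp add: Y_def)
  ultimately show ?thesis by blast
qed

end

lemma fin_qp_resolutionD:
  assumes "fin_qp_resolution R M X d"
  shows "chain_complex R X d" and "projective R (X i)"
    and "\<exists>a. \<forall>i. cx_nonzero X i \<longrightarrow> a \<le> i" and "\<exists>b. \<forall>i. cx_nonzero X i \<longrightarrow> i \<le> b"
    and "\<exists>n :: int \<Rightarrow> nat. (\<forall>j\<ge>cx_inf X. mod_iso R (homology X d j) (pow_mod M (n j)))
      \<and> (\<exists>j\<ge>cx_inf X. n j \<noteq> 0)"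
proof -
  note qp = assms[unfolded fin_qp_resolution_def]
  show "chain_complex R X d" using qp[THEN conjunct1] by (rule chain_complex.intro)
  show "projective R (X i)" using qp[THEN conjunct2, THEN conjunct1] by blast
  show "\<exists>a. \<forall>i. cx_nonzero X i \<longrightarrow> a \<le> i"
    by (rule qp[THEN conjunct2, THEN conjunct2, THEN conjunct2, THEN conjunct1])
  show "\<exists>b. \<forall>i. cx_nonzero X i \<longrightarrow> i \<le> b"
    by (rule qp[THEN conjunct2, THEN conjunct2, THEN conjunct2, THEN conjunct2, THEN conjunct1])
  show "\<exists>n :: int \<Rightarrow> nat. (\<forall>j\<ge>cx_inf X. mod_iso R (homology X d j) (pow_mod M (n j)))
      \<and> (\<exists>j\<ge>cx_inf X. n j \<noteq> 0)"
    by (rule qp[THEN conjunct2, THEN conjunct2, THEN conjunct2, THEN conjunct2, THEN conjunct2])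
qed

lemma fin_qp_resolution_bounded:
  assumes "fin_qp_resolution R M X d"
  obtains a t where "\<forall>i<a. carrier (X i) = {\<zero>\<^bsub>X i\<^esub>}" and "\<forall>i>t. carrier (X i) = {\<zero>\<^bsub>X i\<^esub>}"
proof -
  obtain a t where a: "\<forall>i. cx_nonzero X i \<longrightarrow> a \<le> i" and t: "\<forall>i. cx_nonzero X i \<longrightarrow> i \<le> t"
    using fin_qp_resolutionD(3,4)[OF assms] by blast
  have "\<forall>i<a. \<not> cx_nonzero X i" and "\<forall>i>t. \<not> cx_nonzero X i"
    using a t by (auto simp: not_le[symmetric])
  then show ?thesis using that unfolding cx_nonzero_def is_zero_mod_def by simp
qed

lemma fin_qp_resolution_lowest_homology:
  assumes qp: "fin_qp_resolution R M X d" and M: "left_module R M"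
  obtains j0 n \<pi> where "0 < n j0"
    and "\<forall>j\<ge>j0. homology_quotient R X d j (pow_mod M (n j)) (\<pi> j)"
    and "\<forall>i<j0. cycles X d i \<subseteq> boundaries X d i"
proof -
  interpret chain_complex R X d by (rule fin_qp_resolutionD(1)[OF qp])
  define I where "I = cx_inf X"
  obtain n :: "int \<Rightarrow> nat" where iso: "\<And>j. I \<le> j \<Longrightarrow> mod_iso R (homology X d j) (pow_mod M (n j))"
    and nonzero: "\<exists>j\<ge>I. n j \<noteq> 0"
    using fin_qp_resolutionD(5)[OF qp] unfolding I_def by blast
  have bdd: "bdd_below {i. cx_nonzero X i}"
    using fin_qp_resolutionD(3)[OF qp] unfolding bdd_below_def by blast
  have below_I: "cycles X d i \<subseteq> boundaries X d i" if i: "i < I" for i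
  proof (rule vanishing_cycles_exact)
    have "\<not> cx_nonzero X i"
    proof
      assume "cx_nonzero X i"
      then have "I \<le> i" unfolding I_def cx_inf_def by (rule cInf_lower[OF _ bdd, simplified])
      then show False using i by simp
    qed
    then show "carrier (X i) = {\<zero>\<^bsub>X i\<^esub>}" unfolding cx_nonzero_def is_zero_mod_def by simp
  qed
  obtain j where "I \<le> j" "n j \<noteq> 0" using nonzero by blast
  then have ex: "\<exists>k. n (I + int k) \<noteq> 0" by (intro exI[of _ "nat (j - I)"]) simp
  define k0 where "k0 = (LEAST k. n (I + int k) \<noteq> 0)"
  have n_j0: "0 < n (I + int k0)" using LeastI_ex[OF ex] unfolding k0_def by simp
  define \<pi> where "\<pi> j = (SOME p. homology_quotient R X d j (pow_mod M (n j)) p)" for j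
  have quotient: "homology_quotient R X d j (pow_mod M (n j)) (\<pi> j)" if "I \<le> j" for j
    unfolding \<pi>_def by (rule someI_ex[OF homology_quotient_of_iso[OF left_module_pow_mod[OF M] iso[OF that]]])
  have exact: "cycles X d i \<subseteq> boundaries X d i" if i: "i < I + int k0" for i
  proof (cases "i < I")
    case False
    then have i_eq: "I + int (nat (i - I)) = i" by simp
    have "nat (i - I) < k0" using i False by simp
    then have "n (I + int (nat (i - I))) = 0" using not_less_Least unfolding k0_def by blast
    then have "is_zero_mod (pow_mod M (n i))" unfolding i_eq by (auto simp: is_zero_mod_def)
    moreover have "homology_quotient R X d i (pow_mod M (n i)) (\<pi> i)" using quotient False by simp
    ultimately show ?thesis using homology_quotient_zero_exact by blast
  qed (rule below_I)
  show ?thesis by (rule that[of n "I + int k0" \<pi>]) (use n_j0 quotient exact in auto)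
qed

lemma (in chain_complex) lowest_homology_retract:
  assumes M: "left_module R M" and res: "proj_resolution R M Q e \<epsilon>"
    and ext_M: "ext_vanish_pos R Q e M" and ext_R: "ext_vanish_pos R Q e (ring_mod R)"
    and proj: "\<And>i. projective R (X i)"
    and below: "\<forall>i<a. carrier (X i) = {\<zero>\<^bsub>X i\<^esub>}" and above: "\<forall>i>t. carrier (X i) = {\<zero>\<^bsub>X i\<^esub>}"
    and n: "0 < n j0" and quot: "\<forall>j\<ge>j0. homology_quotient R X d j (pow_mod M (n j)) (\<pi> j)"
    and exact: "\<forall>i<j0. cycles X d i \<subseteq> boundaries X d i"
  shows "\<exists>\<sigma> \<rho>. lin_map R M (X j0) \<sigma> \<and> lin_map R (X j0) M \<rho> \<and> (\<forall>m\<in>carrier M. \<rho> (\<sigma> m) = m)"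
proof -
  have R: "ring R" using left_module_ring[OF M] .
  define \<iota> where "\<iota> m = (\<lambda>j :: nat. if j = 0 then m else \<zero>\<^bsub>M\<^esub>)" for m
  have lifting: "homology_lifting R X d M Q e \<epsilon> (\<lambda>j. pow_mod M (n j)) \<pi> j0 t \<iota>"
    using chain_complex_axioms M res ext_vanish_pos_projective[OF R ext_R proj] left_module_pow_mod[OF M]
      ext_vanish_pos_pow_mod[OF M ext_M] quot above lin_map_pow_mod_incl[OF M n]
    unfolding \<iota>_def by (intro homology_lifting.intro homology_lifting_axioms.intro) auto
  obtain \<sigma> where \<sigma>: "lin_map R M (X j0) \<sigma>"
    and \<sigma>_\<pi>: "\<And>m. m \<in> carrier M \<Longrightarrow> \<sigma> m \<in> cycles X d j0 \<and> \<pi> j0 (\<sigma> m) = \<iota> m"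
    using homology_lifting.lift_to_cycles[OF lifting] by blast
  obtain \<rho> where \<rho>: "lin_map R (X j0) (pow_mod M (n j0)) \<rho>" and \<rho>_\<pi>: "\<forall>z\<in>cycles X d j0. \<rho> z = \<pi> j0 z"
    using homology_quotient_extends[OF proj below[rule_format] exact[rule_format]] quot by blast
  have "\<forall>m\<in>carrier M. \<rho> (\<sigma> m) 0 = m" using \<sigma>_\<pi> \<rho>_\<pi> by (simp add: \<iota>_def)
  then show ?thesis using \<sigma> lin_map_comp[OF \<rho> lin_map_pow_mod_coord[OF n]] by blast
qed

theorem corollary1p3:
  fixes R :: "'r ring"
    and M :: "('r, 'm) module"
    and X :: "int \<Rightarrow> ('r, 'b) module" and d :: "int \<Rightarrow> 'b \<Rightarrow> 'b"
    and Q :: "nat \<Rightarrow> ('r, 'q) module" and e :: "nat \<Rightarrow> 'q \<Rightarrow> 'q" and \<epsilon> :: "'q \<Rightarrow> 'm"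
  assumes coh: "left_coherent R"
    and fp: "fin_pres R M"
    and qpd_fin: "is_zero_mod M \<or> fin_qp_resolution R M X d"
    and res: "proj_resolution R M Q e \<epsilon>"
    and ext: "ext_vanish_pos R Q e (dsum M (ring_mod R))"
  shows "projective R M"
proof (cases "is_zero_mod M")
  case True
  then show ?thesis by (rule zero_module_projective[OF fp])
next
  case False
  then have qp: "fin_qp_resolution R M X d" using qpd_fin by blast
  have M: "left_module R M" using fp by (simp add: fin_pres_def)
  obtain a t where below: "\<forall>i<a. carrier (X i) = {\<zero>\<^bsub>X i\<^esub>}"
    and above: "\<forall>i>t. carrier (X i) = {\<zero>\<^bsub>X i\<^esub>}"
    using fin_qp_resolution_bounded[OF qp] by blast
  obtain j0 n \<pi> where n: "0 < n j0" and quot: "\<forall>j\<ge>j0. homology_quotient R X d j (pow_mod M (n j)) (\<pi> j)"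
    and exact: "\<forall>i<j0. cycles X d i \<subseteq> boundaries X d i"
    by (rule fin_qp_resolution_lowest_homology[OF qp M]) (rule that)
  have ext_M: "ext_vanish_pos R Q e M" and ext_R: "ext_vanish_pos R Q e (ring_mod R)"
    using ext_vanish_pos_dsumD[OF ext M left_module_ring_mod[OF left_module_ring[OF M]]] by auto
  obtain \<sigma> \<rho> where \<sigma>: "lin_map R M (X j0) \<sigma>" and \<rho>: "lin_map R (X j0) M \<rho>"
    and \<rho>_\<sigma>: "\<forall>m\<in>carrier M. \<rho> (\<sigma> m) = m"
    using chain_complex.lowest_homology_retract[OF fin_qp_resolutionD(1)[OF qp] M res ext_M ext_R
        fin_qp_resolutionD(2)[OF qp] below above n quot exact] by blast
  show ?thesis
    using \<rho>_\<sigma> by (intro projective_retract[OF fp fin_qp_resolutionD(2)[OF qp] \<sigma> \<rho>]) simp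
qed

end
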